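(* Let $S=\mathcal{M}^0(I,J,G,P)$ be a regular Rees matrix semigroup, let $\sigma=\sigma_1\oplus\cdots\oplus\sigma_r$ where $\sigma_1,\dots,\sigma_r$ is a complete set of pairwise inequivalent irreducible matrix representations of $G$, and let $(\pi^l,\pi^r)$ be the associated standard representations (a pair of matrix Schützenberger representations of $S$). (1) If $\pi^l$ and $\pi^r$ are both semiunitary, then $S$ is an inverse semigroup. (2) If $*$ is an involution on $S$ and $\pi^l,\pi^r$ are both semiunitary $*$-representations, then $S$ is an inverse semigroup and for every $s\in S$, $s^{*}$ is the inverse of $s$ (i.e. $ss^{*}s=s$ and $s^{*}ss^{*}=s^{*}$).
   Context: $G$ is a finite group, $G^0=G\cup\{0\}$, $I=\{1,\dots,m\}$, $J=\{1,\dots,n\}$, $P=(p_{ji})$ an $n\times m$ matrix over $G^0$. $\mathcal{M}^0(I,J,G,P)$ consists of elements $(a)_{ij}$ ($a\in G$, $i\in I$, $j\in J$) and a zero, with $(a)_{ij}\circ(b)_{kl}=(ap_{jk}b)_{il}$ if $p_{jk}\ne0$, else $0$; regular means every row and column of $P$ has a nonzero entry. For a matrix representation $\sigma:G\to GL_k(\mathbb{C})$ extended by $\sigma(0)=0$: $\pi^l((a)_{ij})$ is the $m\times m$ block matrix with $(i,l)$ block $\sigma(ap_{jl})$ ($l\in I$) and other blocks $0$; $\pi^r((a)_{ij})$ is the $n\times n$ block matrix with $(l,j)$ block $\sigma(p_{li}a)$ ($l\in J$) and other blocks $0$; both send $0\mapsto 0$. A matrix representation $\pi$ is semiunitary if $\pi(s)\pi(s)^{*}\pi(s)=\pi(s)$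 for all $s$, and a $*$-representation (for an involution $*$ on $S$, i.e. a bijection with $a^{**}=a$, $(ab)^{*}=b^{*}a^{*}$) if $\pi(s^{*})=\pi(s)^{*}$, where $^{*}$ on matrices is conjugate transpose. An inverse semigroup is one in which each $a$ has a unique $b$ with $aba=a$, $bab=b$. *)

theory Defs
  imports "HOL-Algebra.Group" "Jordan_Normal_Form.Matrix"
begin

definition adj_mat :: "complex mat \<Rightarrow> complex mat" where
  "adj_mat A = mat (dim_col A) (dim_row A) (\<lambda>(i,j). cnj (A $$ (j,i)))"

definition mat_rep :: "('g,'b) monoid_scheme \<Rightarrow> nat \<Rightarrow> ('g \<Rightarrow> complex mat) \<Rightarrow> bool" where
  "mat_rep G d \<sigma> \<longleftrightarrow>
     (\<forall>g\<in>carrier G. \<sigma> g \<in> carrier_mat d d) \<and>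
     \<sigma> \<one>\<^bsub>G\<^esub> = 1\<^sub>m d \<and>
     (\<forall>g\<in>carrier G. \<forall>h\<in>carrier G. \<sigma> (g \<otimes>\<^bsub>G\<^esub> h) = \<sigma> g * \<sigma> h)"

definition is_subspace :: "nat \<Rightarrow> complex vec set \<Rightarrow> bool" where
  "is_subspace d W \<longleftrightarrow> W \<subseteq> carrier_vec d \<and> 0\<^sub>v d \<in> W \<and>
     (\<forall>v\<in>W. \<forall>w\<in>W. v + w \<in> W) \<and> (\<forall>c. \<forall>v\<in>W. c \<cdot>\<^sub>v v \<in> W)"

definition irreducible_rep :: "('g,'b) monoid_scheme \<Rightarrow> nat \<Rightarrow> ('g \<Rightarrow> complex mat) \<Rightarrow> bool" where
  "irreducible_rep G d \<sigma> \<longleftrightarrow> mat_rep G d \<sigma> \<and> d > 0 \<and>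
     (\<forall>W. is_subspace d W \<and> (\<forall>g\<in>carrier G. \<forall>w\<in>W. \<sigma> g *\<^sub>v w \<in> W)
          \<longrightarrow> W = {0\<^sub>v d} \<or> W = carrier_vec d)"

definition equiv_rep :: "('g,'b) monoid_scheme \<Rightarrow> nat \<Rightarrow> ('g \<Rightarrow> complex mat) \<Rightarrow> nat \<Rightarrow> ('g \<Rightarrow> complex mat) \<Rightarrow> bool" where
  "equiv_rep G d \<sigma> e \<tau> \<longleftrightarrow> d = e \<and>
     (\<exists>T \<in> carrier_mat d d. invertible_mat T \<and> (\<forall>g\<in>carrier G. T * \<sigma> g = \<tau> g * T))"

definition complete_irreps :: "('g,'b) monoid_scheme \<Rightarrow> (nat \<times> ('g \<Rightarrow> complex mat)) list \<Rightarrow> bool" where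
  "complete_irreps G ss \<longleftrightarrow>
     (\<forall>x\<in>set ss. irreducible_rep G (fst x) (snd x)) \<and>
     (\<forall>i<length ss. \<forall>j<length ss. i \<noteq> j \<longrightarrow>
        \<not> equiv_rep G (fst (ss!i)) (snd (ss!i)) (fst (ss!j)) (snd (ss!j))) \<and>
     (\<forall>d \<tau>. irreducible_rep G d \<tau> \<longrightarrow> (\<exists>x\<in>set ss. equiv_rep G d \<tau> (fst x) (snd x)))"

fun dsum_dim :: "(nat \<times> ('g \<Rightarrow> complex mat)) list \<Rightarrow> nat" where
  "dsum_dim [] = 0"
| "dsum_dim (x # xs) = fst x + dsum_dim xs"

fun dsum_rep :: "(nat \<times> ('g \<Rightarrow> complex mat)) list \<Rightarrow> 'g \<Rightarrow> complex mat" where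
  "dsum_rep [] g = 1\<^sub>m 0"
| "dsum_rep (x # xs) g = four_block_mat (snd x g) (0\<^sub>m (fst x) (dsum_dim xs))
                                     (0\<^sub>m (dsum_dim xs) (fst x)) (dsum_rep xs g)"

(* ---------- Rees matrix semigroups M^0(I,J,G,P) ----------
   I = {0..<m}, J = {0..<n} (0-based indices); the element (a)_{ij} is Some (a,i,j),
   the zero is None.  P j i is the (j,i) entry of the n x m sandwich matrix,
   with None standing for 0. *)

type_synonym 'g rees = "('g \<times> nat \<times> nat) option"

definition rees_carrier :: "('g,'b) monoid_scheme \<Rightarrow> nat \<Rightarrow> nat \<Rightarrow> 'g rees set" where
  "rees_carrier G m n = insert None {Some (a,i,j) | a i j. a \<in> carrier G \<and> i < m \<and> j < n}"

fun rees_mult :: "('g,'b) monoid_scheme \<Rightarrow> (nat \<Rightarrow> nat \<Rightarrow> 'g option) \<Rightarrow> 'g rees \<Rightarrow> 'g rees \<Rightarrow> 'g rees" where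
  "rees_mult G P (Some (a,i,j)) (Some (b,k,l)) =
     (case P j k of None \<Rightarrow> None | Some p \<Rightarrow> Some (a \<otimes>\<^bsub>G\<^esub> p \<otimes>\<^bsub>G\<^esub> b, i, l))"
| "rees_mult G P _ _ = None"

definition sandwich_matrix :: "('g,'b) monoid_scheme \<Rightarrow> nat \<Rightarrow> nat \<Rightarrow> (nat \<Rightarrow> nat \<Rightarrow> 'g option) \<Rightarrow> bool" where
  "sandwich_matrix G m n P \<longleftrightarrow> (\<forall>j<n. \<forall>i<m. \<forall>p. P j i = Some p \<longrightarrow> p \<in> carrier G)"

definition regular_sandwich :: "nat \<Rightarrow> nat \<Rightarrow> (nat \<Rightarrow> nat \<Rightarrow> 'g option) \<Rightarrow> bool" where
  "regular_sandwich m n P \<longleftrightarrow> (\<forall>j<n. \<exists>i<m. P j i \<noteq> None) \<and> (\<forall>i<m. \<exists>j<n. P j i \<noteq> None)"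

definition inverse_semigroup :: "'s set \<Rightarrow> ('s \<Rightarrow> 's \<Rightarrow> 's) \<Rightarrow> bool" where
  "inverse_semigroup S f \<longleftrightarrow> (\<forall>a\<in>S. \<exists>!b. b \<in> S \<and> f (f a b) a = a \<and> f (f b a) b = b)"

definition involution_on :: "'s set \<Rightarrow> ('s \<Rightarrow> 's \<Rightarrow> 's) \<Rightarrow> ('s \<Rightarrow> 's) \<Rightarrow> bool" where
  "involution_on S f st \<longleftrightarrow> bij_betw st S S \<and> (\<forall>a\<in>S. st (st a) = a) \<and>
     (\<forall>a\<in>S. \<forall>b\<in>S. st (f a b) = f (st b) (st a))"

definition ext_rep :: "nat \<Rightarrow> ('g \<Rightarrow> complex mat) \<Rightarrow> 'g option \<Rightarrow> complex mat" where
  "ext_rep k \<sigma> x = (case x of None \<Rightarrow> 0\<^sub>m k k | Some g \<Rightarrow> \<sigma> g)"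

(* pi^l((a)_{ij}): m x m block matrix with (i,l)-block sigma(a p_{jl}), others 0 *)
definition pi_l :: "('g,'b) monoid_scheme \<Rightarrow> (nat \<Rightarrow> nat \<Rightarrow> 'g option) \<Rightarrow> nat \<Rightarrow> nat
                    \<Rightarrow> ('g \<Rightarrow> complex mat) \<Rightarrow> 'g rees \<Rightarrow> complex mat" where
  "pi_l G P m k \<sigma> s = (case s of
      None \<Rightarrow> 0\<^sub>m (m*k) (m*k)
    | Some (a,i,j) \<Rightarrow> mat (m*k) (m*k) (\<lambda>(r,c).
         if r div k = i then
           ext_rep k \<sigma> (map_option (\<lambda>p. a \<otimes>\<^bsub>G\<^esub> p) (P j (c div k))) $$ (r mod k, c mod k)
         else 0))"

(* pi^r((a)_{ij}): n x n block matrix with (l,j)-block sigma(p_{li} a), others 0 *)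
definition pi_r :: "('g,'b) monoid_scheme \<Rightarrow> (nat \<Rightarrow> nat \<Rightarrow> 'g option) \<Rightarrow> nat \<Rightarrow> nat
                    \<Rightarrow> ('g \<Rightarrow> complex mat) \<Rightarrow> 'g rees \<Rightarrow> complex mat" where
  "pi_r G P n k \<sigma> s = (case s of
      None \<Rightarrow> 0\<^sub>m (n*k) (n*k)
    | Some (a,i,j) \<Rightarrow> mat (n*k) (n*k) (\<lambda>(r,c).
         if c div k = j then
           ext_rep k \<sigma> (map_option (\<lambda>p. p \<otimes>\<^bsub>G\<^esub> a) (P (r div k) i)) $$ (r mod k, c mod k)
         else 0))"

definition semiunitary :: "'s set \<Rightarrow> ('s \<Rightarrow> complex mat) \<Rightarrow> bool" where
  "semiunitary S \<pi> \<longleftrightarrow> (\<forall>s\<in>S. \<pi> s * adj_mat (\<pi> s) * \<pi> s = \<pi> s)"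

definition star_rep :: "'s set \<Rightarrow> ('s \<Rightarrow> 's) \<Rightarrow> ('s \<Rightarrow> complex mat) \<Rightarrow> bool" where
  "star_rep S st \<pi> \<longleftrightarrow> (\<forall>s\<in>S. \<pi> (st s) = adj_mat (\<pi> s))"

end

theory Submission
  imports Defs "Jordan_Normal_Form.Gram_Schmidt"
begin

(* Semiunitarity of the standard representations forces every row and every column of the
   sandwich matrix P to contain exactly one nonzero entry. Indeed, if p_{jl} is nonzero, the
   image of (p_{jl}^{-1})_{lj} under pi^l is a partial isometry one of whose columns is a standard
   basis vector; the row through that entry must then vanish elsewhere, whereas a second nonzero
   entry in row j of P would place there a row of an invertible matrix sigma(g). A regular Rees
   matrix semigroup whose sandwich matrix has this shape is an inverse semigroup: the inverse of
   (a)_{ij} is (c)_{i'j'}, where p_{ji'} and p_{j'i} are the nonzero entries in row j and column i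
   and c p_{j'i} = (a p_{ji'})^{-1}.

   If pi^l is moreover a *-representation, the single nonzero block sigma(a p_{ji'}) of pi^l((a)_{ij})
   is unitary, so the image of the adjoint element has the block sigma((a p_{ji'})^{-1}) in the
   transposed position. Since sigma contains every irreducible representation it is faithful:
   an element acting trivially on all irreducibles acts trivially on every unitary
   representation, which decomposes orthogonally into irreducibles, in particular on the regular
   one. Hence the adjoint of (a)_{ij} is its inverse. *)

section \<open>Conjugate transpose and orthonormal frames\<close>

(* Gram_Schmidt brings the adjugate of Determinant into scope under the name adj_mat. *)
abbreviation adjm :: "complex mat \<Rightarrow> complex mat" where "adjm \<equiv> Defs.adj_mat"

lemma adjm_carrier[simp]: "A \<in> carrier_mat a b \<Longrightarrow> adjm A \<in> carrier_mat b a"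
  unfolding Defs.adj_mat_def by auto

lemma adjm_dims[simp]: "dim_row (adjm A) = dim_col A" "dim_col (adjm A) = dim_row A"
  unfolding Defs.adj_mat_def by auto

lemma adjm_index[simp]: "i < dim_col A \<Longrightarrow> j < dim_row A \<Longrightarrow> adjm A $$ (i,j) = cnj (A $$ (j,i))"
  unfolding Defs.adj_mat_def by auto

lemma adjm_adjm[simp]: "adjm (adjm A) = A"
  by (rule eq_matI) auto

lemma adjm_mult:
  assumes "A \<in> carrier_mat a b" "B \<in> carrier_mat b c"
  shows "adjm (A * B) = adjm B * adjm A"
  by (rule eq_matI) (use assms in \<open>auto simp: scalar_prod_def intro!: sum.cong\<close>)

lemma adjm_mat_diag: "adjm (mat_diag r f) = mat_diag r (\<lambda>i. cnj (f i))"
  by (rule eq_matI) (auto simp: mat_diag_def)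

lemma mult_cnj_eq_cmod_square: "(z::complex) * cnj z = complex_of_real ((cmod z)^2)"
  by (metis complex_norm_square)

lemma cscalar_prod_self:
  fixes v :: "complex vec"
  assumes "v \<in> carrier_vec d"
  shows "v \<bullet>c v = complex_of_real (\<Sum>t<d. (cmod (v$t))^2)"
  using assms unfolding scalar_prod_def of_real_sum
  by (auto simp: lessThan_atLeast0 mult_cnj_eq_cmod_square intro!: sum.cong)

lemma eq_mat_if_mult_vec_eq:
  fixes A B :: "'a::comm_ring_1 mat"
  assumes "A \<in> carrier_mat a b" "B \<in> carrier_mat a b"
    and "\<And>x. x \<in> carrier_vec b \<Longrightarrow> A *\<^sub>v x = B *\<^sub>v x"
  shows "A = B"
proof (rule eq_matI)
  fix i j assume ij: "i < dim_row B" "j < dim_col B"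
  have "A $$ (i,j) = (A *\<^sub>v unit_vec b j) $ i" "B $$ (i,j) = (B *\<^sub>v unit_vec b j) $ i"
    using assms(1,2) ij by (simp_all add: row_def[symmetric])
  then show "A $$ (i, j) = B $$ (i, j)" using assms(3)[of "unit_vec b j"] by simp
qed (use assms in auto)

lemma mult_mat_vec_zero: "(A :: 'a::semiring_0 mat) \<in> carrier_mat a b \<Longrightarrow> A *\<^sub>v 0\<^sub>v b = 0\<^sub>v a"
  by (rule eq_vecI) (auto simp: scalar_prod_def)

definition mat_range :: "complex mat \<Rightarrow> complex vec set" where
  "mat_range B = (\<lambda>x. B *\<^sub>v x) ` carrier_vec (dim_col B)"

definition orthonormal_frame :: "nat \<Rightarrow> nat \<Rightarrow> complex mat \<Rightarrow> bool" where
  "orthonormal_frame d r B \<longleftrightarrow> B \<in> carrier_mat d r \<and> adjm B * B = 1\<^sub>m r"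

lemma orthonormal_frame_left_inverse:
  assumes "orthonormal_frame d r B" "x \<in> carrier_vec r"
  shows "adjm B *\<^sub>v (B *\<^sub>v x) = x"
proof -
  have B: "B \<in> carrier_mat d r" "adjm B * B = 1\<^sub>m r"
    using assms(1) unfolding orthonormal_frame_def by auto
  have "adjm B *\<^sub>v (B *\<^sub>v x) = (adjm B * B) *\<^sub>v x"
    using assoc_mult_mat_vec[of "adjm B" r d B r x] B assms(2) by simp
  then show ?thesis using B assms(2) by simp
qed

lemma (in vec_space) submodule_has_finite_basis:
  assumes sub: "submodule class_ring W V"
  shows "\<exists>A. finite A \<and> card A \<le> n \<and> A \<subseteq> W \<and> lin_indpt A \<and> span A = W"
proof -
  have Wc: "W \<subseteq> carrier_vec n" using sub unfolding submodule_def by auto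
  define indep_in_W where "indep_in_W A \<longleftrightarrow> A \<subseteq> W \<and> lin_indpt A" for A
  have bound: "finite A \<and> card A \<le> n" if "indep_in_W A" for A
    using li_le_dim[OF fin_dim, of A] that Wc unfolding indep_in_W_def dim_is_n by auto
  have "indep_in_W {}" unfolding indep_in_W_def lin_dep_def by auto
  from maximal_exists[of indep_in_W n, OF bound this]
  obtain A where maxA: "maximal A indep_in_W" by blast
  then have indepA: "indep_in_W A" unfolding maximal_def by auto
  have "W \<subseteq> span A"
  proof
    fix w assume w: "w \<in> W"
    show "w \<in> span A"
    proof (rule ccontr)
      assume ns: "w \<notin> span A"
      then have "w \<notin> A" using in_own_span[of A] indepA Wc unfolding indep_in_W_def by auto
      moreover have "lin_indpt (A \<union> {w})"
        using lin_dep_iff_in_span[of A w] indepA Wc w ns \<open>w \<notin> A\<close> unfolding indep_in_W_def by auto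
      then have "A \<union> {w} = A" using maxA w indepA unfolding maximal_def indep_in_W_def by auto
      ultimately show False by auto
    qed
  qed
  moreover have "span A \<subseteq> W" using span_is_subset[OF _ sub] indepA unfolding indep_in_W_def by auto
  ultimately show ?thesis using indepA bound[OF indepA] unfolding indep_in_W_def by auto
qed

lemma subspace_eq_col_space_corthogonal:
  fixes W :: "complex vec set"
  assumes W: "is_subspace d W"
  shows "\<exists>us. set us \<subseteq> carrier_vec d \<and> corthogonal us \<and> length us \<le> d \<and>
     vec_space.col_space d (mat_of_cols d us) = W"
proof -
  interpret cof_vec_space d "TYPE(complex)" .
  have "submodule class_ring W V"
    unfolding submodule_def using W vec_module unfolding is_subspace_def by auto
  then obtain A where A: "finite A" "card A \<le> d" "A \<subseteq> W" "lin_indpt A" "span A = W"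
    using submodule_has_finite_basis by blast
  obtain xs where xs: "set xs = A" "distinct xs" using finite_distinct_list[OF A(1)] by auto
  have xsc: "set xs \<subseteq> carrier_vec d" using xs A(3) W unfolding is_subspace_def by auto
  note gs = gram_schmidt_result[OF xsc xs(2), of "gram_schmidt d xs"]
  have "length (gram_schmidt d xs) \<le> d" using gs(4) A(2) xs A(4) distinct_card[OF xs(2)] by auto
  moreover have "col_space (mat_of_cols d (gram_schmidt d xs)) = W"
    unfolding col_space_def using gs(1,3) xs A by simp
  ultimately show ?thesis using gs(2,3) xs A(4) by blast
qed

lemma mat_range_mult_invertible:
  assumes B: "B \<in> carrier_mat d r" and D: "D \<in> carrier_mat r r" and D': "D' \<in> carrier_mat r r"
    and DD': "D * D' = 1\<^sub>m r"
  shows "mat_range (B * D) = mat_range B"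
proof (intro equalityI subsetI)
  fix y assume "y \<in> mat_range (B * D)"
  then obtain x where x: "x \<in> carrier_vec r" "y = (B * D) *\<^sub>v x"
    using B D by (auto simp: mat_range_def)
  then have "y = B *\<^sub>v (D *\<^sub>v x)" using assoc_mult_mat_vec[OF B D x(1)] by simp
  then show "y \<in> mat_range B" using B D x(1) by (auto simp: mat_range_def)
next
  fix y assume "y \<in> mat_range B"
  then obtain x where x: "x \<in> carrier_vec r" "y = B *\<^sub>v x"
    using B by (auto simp: mat_range_def)
  have "(B * D) *\<^sub>v (D' *\<^sub>v x) = B *\<^sub>v ((D * D') *\<^sub>v x)"
    using B D D' x(1) by (simp add: assoc_mult_mat_vec)
  then have "y = (B * D) *\<^sub>v (D' *\<^sub>v x)" using DD' x by simp
  then show "y \<in> mat_range (B * D)" using B D D' x(1) by (auto simp: mat_range_def)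
qed

lemma corthogonal_gram_mat:
  assumes us: "set us \<subseteq> carrier_vec d" "corthogonal us"
  shows "\<exists>R. (\<forall>i<length us. R i > 0)
    \<and> adjm (mat_of_cols d us) * mat_of_cols d us = mat_diag (length us) (\<lambda>i. complex_of_real (R i))"
proof -
  define r where "r = length us"
  define R where "R i = (\<Sum>t<d. (cmod (us!i $t))^2)" for i
  have usc: "us!i \<in> carrier_vec d" if "i < r" for i
    using us(1) that unfolding r_def by auto
  have nu: "us!i \<bullet>c us!i = complex_of_real (R i)" if "i < r" for i
    using cscalar_prod_self[OF usc[OF that]] unfolding R_def .
  have "R i > 0" if "i < r" for i
  proof -
    have "R i \<noteq> 0" using corthogonalD[OF us(2), of i i] that nu[OF that] r_def by auto
    moreover have "R i \<ge> 0" unfolding R_def by (auto intro: sum_nonneg)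
    ultimately show ?thesis by auto
  qed
  moreover have "adjm (mat_of_cols d us) * mat_of_cols d us = mat_diag r (\<lambda>i. complex_of_real (R i))"
  proof (rule eq_matI)
    fix i j assume "i < dim_row (mat_diag r (\<lambda>i. complex_of_real (R i)))"
        "j < dim_col (mat_diag r (\<lambda>i. complex_of_real (R i)))"
    then have ij: "i < r" "j < r" by (auto simp: mat_diag_def)
    have "(adjm (mat_of_cols d us) * mat_of_cols d us) $$ (i,j) = us!j \<bullet>c us!i"
      using ij usc[OF ij(1)] unfolding r_def
      by (auto simp: scalar_prod_def mat_of_cols_index mult.commute intro!: sum.cong)
    also have "\<dots> = mat_diag r (\<lambda>i. complex_of_real (R i)) $$ (i,j)"
      using corthogonalD[OF us(2), of j i] ij nu[of i] unfolding r_def mat_diag_def by auto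
    finally show "(adjm (mat_of_cols d us) * mat_of_cols d us) $$ (i,j)
        = mat_diag r (\<lambda>i. complex_of_real (R i)) $$ (i,j)" .
  qed (auto simp: mat_diag_def r_def)
  ultimately show ?thesis unfolding r_def by blast
qed

text \<open>Normalizing the columns is right multiplication by a positive diagonal matrix, which does
  not change the column space.\<close>

lemma positive_gram_normalize:
  assumes B0c: "B0 \<in> carrier_mat d r" and Rpos: "\<And>i. i < r \<Longrightarrow> R i > 0"
    and gram: "adjm B0 * B0 = mat_diag r (\<lambda>i. complex_of_real (R i))"
  shows "\<exists>B. orthonormal_frame d r B \<and> mat_range B = mat_range B0"
proof -
  have Rne: "R i \<noteq> 0" "\<bar>R i\<bar> = R i" if "i < r" for i using Rpos[OF that] by auto
  define D where "D = mat_diag r (\<lambda>i. complex_of_real (1 / sqrt (R i)))"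
  define D' where "D' = mat_diag r (\<lambda>i. complex_of_real (sqrt (R i)))"
  have Dc: "D \<in> carrier_mat r r" and D'c: "D' \<in> carrier_mat r r"
    unfolding D_def D'_def by auto
  have DD': "D * D' = 1\<^sub>m r"
    unfolding D_def D'_def mat_diag_diag mat_diag_one[symmetric]
    by (rule eq_matI) (auto simp: mat_diag_def Rpos Rne simp flip: of_real_mult)
  have aB0: "adjm B0 \<in> carrier_mat r d" using B0c by simp
  have "adjm (B0 * D) * (B0 * D) = D * adjm B0 * (B0 * D)"
    using adjm_mult[OF B0c Dc] by (simp add: D_def adjm_mat_diag)
  also have "\<dots> = D * (adjm B0 * B0) * D"
    using assoc_mult_mat[OF Dc aB0, of "B0 * D" r] assoc_mult_mat[OF aB0 B0c Dc]
      assoc_mult_mat[OF Dc _ Dc, of "adjm B0 * B0"] B0c Dc aB0 by simp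
  also have "\<dots> = 1\<^sub>m r"
    unfolding gram D_def mat_diag_diag mat_diag_one[symmetric]
    by (rule eq_matI) (auto simp: mat_diag_def Rpos Rne simp flip: of_real_mult)
  finally have "orthonormal_frame d r (B0 * D)"
    unfolding orthonormal_frame_def using B0c Dc by auto
  moreover have "mat_range (B0 * D) = mat_range B0"
    by (rule mat_range_mult_invertible[OF B0c Dc D'c DD'])
  ultimately show ?thesis by blast
qed

lemma subspace_has_orthonormal_frame:
  assumes W: "is_subspace d W"
  shows "\<exists>r B. orthonormal_frame d r B \<and> r \<le> d \<and> mat_range B = W"
proof -
  obtain us where us: "set us \<subseteq> carrier_vec d" "corthogonal us" "length us \<le> d"
     "vec_space.col_space d (mat_of_cols d us) = W"
    using subspace_eq_col_space_corthogonal[OF W] by blast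
  have "mat_range (mat_of_cols d us) = W"
    using us(4) vec_space.col_space_eq[of "mat_of_cols d us" d "length us"]
    by (auto simp: mat_range_def intro: mult_mat_vec_carrier[OF mat_of_cols_carrier(1)])
  moreover obtain R where "\<forall>i<length us. R i > 0"
    and "adjm (mat_of_cols d us) * mat_of_cols d us = mat_diag (length us) (\<lambda>i. complex_of_real (R i))"
    using corthogonal_gram_mat[OF us(1,2)] by blast
  ultimately show ?thesis
    using positive_gram_normalize[OF mat_of_cols_carrier(1)] us(3) by metis
qed

definition orth_compl :: "complex mat \<Rightarrow> complex vec set" where
  "orth_compl B = {v \<in> carrier_vec (dim_row B). adjm B *\<^sub>v v = 0\<^sub>v (dim_col B)}"

lemma is_subspace_orth_compl:
  assumes "B \<in> carrier_mat d r"
  shows "is_subspace d (orth_compl B)"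
  using assms unfolding is_subspace_def orth_compl_def
  by (auto simp: mult_add_distrib_mat_vec[of "adjm B" r d] mult_mat_vec[of "adjm B" r d])

lemma orth_compl_projection:
  assumes B: "orthonormal_frame d r B" and v: "v \<in> carrier_vec d"
  shows "v - B *\<^sub>v (adjm B *\<^sub>v v) \<in> orth_compl B"
proof -
  have Bc: "B \<in> carrier_mat d r" and aB: "adjm B \<in> carrier_mat r d"
    using B by (auto simp: orthonormal_frame_def)
  have "adjm B *\<^sub>v (v - B *\<^sub>v (adjm B *\<^sub>v v)) = adjm B *\<^sub>v v - adjm B *\<^sub>v (B *\<^sub>v (adjm B *\<^sub>v v))"
    using mult_minus_distrib_mat_vec[OF aB v, of "B *\<^sub>v (adjm B *\<^sub>v v)"] Bc aB v by simp
  also have "\<dots> = 0\<^sub>v r"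
    using orthonormal_frame_left_inverse[OF B, of "adjm B *\<^sub>v v"] aB v by simp
  moreover have "v - B *\<^sub>v (adjm B *\<^sub>v v) \<in> carrier_vec d"
    using minus_carrier_vec[OF v mult_mat_vec_carrier[OF Bc mult_mat_vec_carrier[OF aB v]]] .
  ultimately show ?thesis using Bc unfolding orth_compl_def by simp
qed

lemma orth_compl_nonzero:
  assumes B: "orthonormal_frame d r B" and ne: "mat_range B \<noteq> carrier_vec d"
  shows "orth_compl B \<noteq> {0\<^sub>v d}"
proof -
  have Bc: "B \<in> carrier_mat d r" and aB: "adjm B \<in> carrier_mat r d"
    using B by (auto simp: orthonormal_frame_def)
  have "mat_range B \<subseteq> carrier_vec d" using Bc by (auto simp: mat_range_def)
  then obtain v where v: "v \<in> carrier_vec d" "v \<notin> mat_range B" using ne by blast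
  define w where "w = B *\<^sub>v (adjm B *\<^sub>v v)"
  have "w \<in> mat_range B"
    unfolding mat_range_def w_def using Bc imageI[OF mult_mat_vec_carrier[OF aB v(1)]] by simp
  moreover have wc: "w \<in> carrier_vec d"
    unfolding w_def using mult_mat_vec_carrier[OF Bc mult_mat_vec_carrier[OF aB v(1)]] .
  ultimately have "v - w \<noteq> 0\<^sub>v d"
  proof (intro notI)
    assume "w \<in> mat_range B" and eq: "v - w = 0\<^sub>v d"
    have "v = w"
    proof (rule eq_vecI)
      fix i assume "i < dim_vec w"
      then show "v $ i = w $ i" using arg_cong[OF eq, of "\<lambda>u. u $ i"] v(1) wc by simp
    qed (use v(1) wc in simp)
    then show False using \<open>w \<in> mat_range B\<close> v(2) by simp
  qed
  moreover have "v - w \<in> orth_compl B" unfolding w_def by (rule orth_compl_projection[OF B v(1)])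
  ultimately show ?thesis by blast
qed

lemma orth_compl_ne_carrier:
  assumes B: "orthonormal_frame d r B" and ne: "mat_range B \<noteq> {0\<^sub>v d}"
  shows "orth_compl B \<noteq> carrier_vec d"
proof
  assume all: "orth_compl B = carrier_vec d"
  have Bc: "B \<in> carrier_mat d r" using B by (auto simp: orthonormal_frame_def)
  have "mat_range B \<noteq> {}" unfolding mat_range_def using zero_carrier_vec by blast
  then obtain w where "w \<in> mat_range B" "w \<noteq> 0\<^sub>v d" using ne by blast
  then obtain x where x: "x \<in> carrier_vec r" "B *\<^sub>v x \<noteq> 0\<^sub>v d"
    using Bc unfolding mat_range_def by auto
  have "B *\<^sub>v x \<in> orth_compl B" using all mult_mat_vec_carrier[OF Bc x(1)] by simp
  then have "adjm B *\<^sub>v (B *\<^sub>v x) = 0\<^sub>v r" using Bc unfolding orth_compl_def by simp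
  then have "x = 0\<^sub>v r" using orthonormal_frame_left_inverse[OF B x(1)] by simp
  then show False using x mult_mat_vec_zero[OF Bc] by simp
qed

lemma orthonormal_frame_dim_pos:
  assumes "orthonormal_frame d r B" "mat_range B \<noteq> {0\<^sub>v d}"
  shows "r > 0"
proof (rule ccontr)
  assume "\<not> r > 0"
  then have Bc: "B \<in> carrier_mat d 0" using assms(1) unfolding orthonormal_frame_def by simp
  have "carrier_vec 0 = {0\<^sub>v 0}" by auto
  then have "mat_range B = {B *\<^sub>v 0\<^sub>v 0}"
    using Bc unfolding mat_range_def by (metis carrier_matD(2) image_empty image_insert)
  then show False using assms(2) mult_mat_vec_zero[OF Bc] by simp
qed

lemma orthonormal_frame_dim_less:
  assumes B: "orthonormal_frame d r B" and "r \<le> d" and ne: "mat_range B \<noteq> carrier_vec d"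
  shows "r < d"
proof (rule ccontr)
  assume "\<not> r < d"
  then have "r = d" using assms(2) by simp
  then have Bc: "B \<in> carrier_mat d d" and aB: "adjm B \<in> carrier_mat d d"
    and "adjm B * B = 1\<^sub>m d" using B by (auto simp: orthonormal_frame_def)
  then have BaB: "B * adjm B = 1\<^sub>m d" using mat_mult_left_right_inverse[OF aB Bc] by simp
  have "v \<in> mat_range B" if v: "v \<in> carrier_vec d" for v
  proof -
    have "v = B *\<^sub>v (adjm B *\<^sub>v v)"
      using assoc_mult_mat_vec[OF Bc aB v] BaB v by simp
    moreover have "dim_col B = d" using Bc by simp
    ultimately show ?thesis
      unfolding mat_range_def by (metis image_eqI mult_mat_vec_carrier[OF aB v])
  qed
  moreover have "mat_range B \<subseteq> carrier_vec d"
    using Bc unfolding mat_range_def by (auto intro: mult_mat_vec_carrier)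
  ultimately show False using ne by blast
qed

section \<open>Unitary representations and faithfulness of the sum of all irreducibles\<close>

definition rep_invariant :: "('g,'b) monoid_scheme \<Rightarrow> ('g \<Rightarrow> complex mat) \<Rightarrow> complex vec set \<Rightarrow> bool" where
  "rep_invariant G \<rho> W \<longleftrightarrow> (\<forall>h\<in>carrier G. \<forall>w\<in>W. \<rho> h *\<^sub>v w \<in> W)"

definition unitary_rep :: "('g,'b) monoid_scheme \<Rightarrow> nat \<Rightarrow> ('g \<Rightarrow> complex mat) \<Rightarrow> bool" where
  "unitary_rep G d \<rho> \<longleftrightarrow> mat_rep G d \<rho> \<and> (\<forall>h\<in>carrier G. adjm (\<rho> h) = \<rho> (inv\<^bsub>G\<^esub> h))"

lemma mat_rep_carrier: "mat_rep G d \<rho> \<Longrightarrow> h \<in> carrier G \<Longrightarrow> \<rho> h \<in> carrier_mat d d"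
  unfolding mat_rep_def by auto

lemma compress_carrier[simp]:
  "B \<in> carrier_mat d r \<Longrightarrow> M \<in> carrier_mat d d \<Longrightarrow> adjm B * M * B \<in> carrier_mat r r"
  by (metis adjm_carrier mult_carrier_mat)

lemma invariant_frame_intertwines:
  assumes \<rho>: "mat_rep G d \<rho>" and B: "orthonormal_frame d r B"
    and inv: "rep_invariant G \<rho> (mat_range B)" and h: "h \<in> carrier G"
  shows "\<rho> h * B = B * (adjm B * \<rho> h * B)"
proof (rule eq_mat_if_mult_vec_eq[of _ d r])
  have rc: "\<rho> h \<in> carrier_mat d d" using mat_rep_carrier[OF \<rho> h] .
  have Bc: "B \<in> carrier_mat d r" and aB: "adjm B \<in> carrier_mat r d"
    using B by (auto simp: orthonormal_frame_def)
  show "\<rho> h * B \<in> carrier_mat d r" "B * (adjm B * \<rho> h * B) \<in> carrier_mat d r"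
    using rc Bc by auto
  fix x :: "complex vec" assume x: "x \<in> carrier_vec r"
  have "\<rho> h *\<^sub>v (B *\<^sub>v x) \<in> mat_range B"
    using inv h x Bc unfolding rep_invariant_def mat_range_def by auto
  then obtain y where y: "y \<in> carrier_vec r" "\<rho> h *\<^sub>v (B *\<^sub>v x) = B *\<^sub>v y"
    using Bc by (auto simp: mat_range_def)
  have M: "adjm B * \<rho> h * B \<in> carrier_mat r r" and M1: "adjm B * \<rho> h \<in> carrier_mat r d"
    using rc aB Bc by auto
  have "(B * (adjm B * \<rho> h * B)) *\<^sub>v x = B *\<^sub>v ((adjm B * \<rho> h) *\<^sub>v (B *\<^sub>v x))"
    using assoc_mult_mat_vec[OF Bc M x] assoc_mult_mat_vec[OF M1 Bc x] by simp
  also have "\<dots> = B *\<^sub>v (adjm B *\<^sub>v (\<rho> h *\<^sub>v (B *\<^sub>v x)))"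
    using assoc_mult_mat_vec[OF aB rc, of "B *\<^sub>v x"] Bc x by simp
  also have "\<dots> = B *\<^sub>v y" using y orthonormal_frame_left_inverse[OF B] by simp
  also have "\<dots> = (\<rho> h * B) *\<^sub>v x" using y rc Bc x by simp
  finally show "(\<rho> h * B) *\<^sub>v x = (B * (adjm B * \<rho> h * B)) *\<^sub>v x" by simp
qed

lemma unitary_rep_compress:
  assumes G: "group G" and U: "unitary_rep G d \<rho>" and B: "orthonormal_frame d r B"
    and inv: "rep_invariant G \<rho> (mat_range B)"
  shows "unitary_rep G r (\<lambda>h. adjm B * \<rho> h * B)"
proof -
  have \<rho>: "mat_rep G d \<rho>" using U by (simp add: unitary_rep_def)
  note rc = mat_rep_carrier[OF \<rho>]
  have Bc: "B \<in> carrier_mat d r" and aB: "adjm B \<in> carrier_mat r d" and ON: "adjm B * B = 1\<^sub>m r"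
    using B by (auto simp: orthonormal_frame_def)
  have one: "adjm B * \<rho> \<one>\<^bsub>G\<^esub> * B = 1\<^sub>m r"
    using \<rho> ON aB right_mult_one_mat[OF aB] by (simp add: mat_rep_def)
  have mult: "adjm B * \<rho> (g \<otimes>\<^bsub>G\<^esub> h) * B = adjm B * \<rho> g * B * (adjm B * \<rho> h * B)"
    if g: "g \<in> carrier G" and h: "h \<in> carrier G" for g h
  proof -
    have gB: "adjm B * \<rho> g \<in> carrier_mat r d" using aB rc[OF g] by simp
    have "adjm B * \<rho> (g \<otimes>\<^bsub>G\<^esub> h) * B = adjm B * \<rho> g * (\<rho> h * B)"
      using \<rho> g h assoc_mult_mat[OF aB rc[OF g] rc[OF h]] assoc_mult_mat[OF gB rc[OF h] Bc]
      by (simp add: mat_rep_def)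
    also have "\<dots> = adjm B * \<rho> g * (B * (adjm B * \<rho> h * B))"
      unfolding invariant_frame_intertwines[OF \<rho> B inv h] ..
    also have "\<dots> = adjm B * \<rho> g * B * (adjm B * \<rho> h * B)"
      by (rule assoc_mult_mat[symmetric, of _ r d _ r _ r]) (use gB Bc rc[OF h] in auto)
    finally show ?thesis .
  qed
  have adj: "adjm (adjm B * \<rho> h * B) = adjm B * \<rho> (inv\<^bsub>G\<^esub> h) * B" if h: "h \<in> carrier G" for h
  proof -
    have hB: "adjm B * \<rho> h \<in> carrier_mat r d" using aB rc[OF h] by simp
    have "adjm (adjm B * \<rho> h * B) = adjm B * adjm (adjm B * \<rho> h)"
      using adjm_mult[OF hB Bc] by simp
    also have "adjm (adjm B * \<rho> h) = adjm (\<rho> h) * B"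
      using adjm_mult[OF aB rc[OF h]] by simp
    also have "adjm (\<rho> h) = \<rho> (inv\<^bsub>G\<^esub> h)" using U h unfolding unitary_rep_def by auto
    also have "adjm B * (\<rho> (inv\<^bsub>G\<^esub> h) * B) = adjm B * \<rho> (inv\<^bsub>G\<^esub> h) * B"
      by (rule assoc_mult_mat[symmetric, of _ r d _ d _ r]) (use aB Bc rc G h in auto)
    finally show ?thesis .
  qed
  show ?thesis
    unfolding unitary_rep_def mat_rep_def using one mult adj Bc rc by auto
qed

lemma orth_compl_invariant:
  assumes G: "group G" and U: "unitary_rep G d \<rho>" and B: "orthonormal_frame d r B"
    and inv: "rep_invariant G \<rho> (mat_range B)"
  shows "rep_invariant G \<rho> (orth_compl B)"
  unfolding rep_invariant_def
proof (intro ballI)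
  have \<rho>: "mat_rep G d \<rho>" using U by (simp add: unitary_rep_def)
  note rc = mat_rep_carrier[OF \<rho>]
  have Bc: "B \<in> carrier_mat d r" and aB: "adjm B \<in> carrier_mat r d"
    using B by (auto simp: orthonormal_frame_def)
  fix h v assume h: "h \<in> carrier G" and v: "v \<in> orth_compl B"
  then have vc: "v \<in> carrier_vec d" and v0: "adjm B *\<^sub>v v = 0\<^sub>v r"
    using Bc unfolding orth_compl_def by auto
  have ih: "inv\<^bsub>G\<^esub> h \<in> carrier G" using G h by simp
  define M where "M = adjm B * \<rho> (inv\<^bsub>G\<^esub> h) * B"
  have Mc: "M \<in> carrier_mat r r" unfolding M_def using Bc rc[OF ih] by simp
  have "adjm B * \<rho> h = adjm (adjm (\<rho> h) * B)"
    using adjm_mult[of "adjm (\<rho> h)" d d B r] rc[OF h] Bc by simp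
  also have "adjm (\<rho> h) = \<rho> (inv\<^bsub>G\<^esub> h)" using U h unfolding unitary_rep_def by auto
  also have "\<rho> (inv\<^bsub>G\<^esub> h) * B = B * M"
    unfolding M_def using invariant_frame_intertwines[OF \<rho> B inv ih] .
  also have "adjm (B * M) = adjm M * adjm B" using adjm_mult[OF Bc Mc] .
  finally have eq: "adjm B * \<rho> h = adjm M * adjm B" .
  have "adjm B *\<^sub>v (\<rho> h *\<^sub>v v) = (adjm B * \<rho> h) *\<^sub>v v"
    using assoc_mult_mat_vec[OF aB rc[OF h] vc] by simp
  also have "\<dots> = adjm M *\<^sub>v (adjm B *\<^sub>v v)"
    unfolding eq using assoc_mult_mat_vec[of "adjm M" r r "adjm B" d] Mc aB vc by simp
  also have "\<dots> = 0\<^sub>v r" unfolding v0 using Mc mult_mat_vec_zero[of "adjm M" r r] by simp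
  finally show "\<rho> h *\<^sub>v v \<in> orth_compl B"
    using rc[OF h] vc Bc unfolding orth_compl_def by auto
qed

lemma eq_one_if_fixes_complementary_frames:
  assumes rc: "R \<in> carrier_mat d d" and B: "orthonormal_frame d r B"
    and B2c: "B2 \<in> carrier_mat d s" and B2: "mat_range B2 = orth_compl B"
    and e1: "R * B = B" and e2: "R * B2 = B2"
  shows "R = 1\<^sub>m d"
proof (rule eq_mat_if_mult_vec_eq[OF rc one_carrier_mat])
  have Bc: "B \<in> carrier_mat d r" and aB: "adjm B \<in> carrier_mat r d"
    using B by (auto simp: orthonormal_frame_def)
  fix x :: "complex vec" assume x: "x \<in> carrier_vec d"
  define a where "a = adjm B *\<^sub>v x"
  have ac: "a \<in> carrier_vec r" unfolding a_def using aB x by simp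
  have "x - B *\<^sub>v a \<in> mat_range B2"
    unfolding B2 a_def by (rule orth_compl_projection[OF B x])
  then obtain y where y: "y \<in> carrier_vec s" "x - B *\<^sub>v a = B2 *\<^sub>v y"
    using B2c unfolding mat_range_def by auto
  have xs: "x = B *\<^sub>v a + B2 *\<^sub>v y"
  proof (rule eq_vecI)
    fix i assume "i < dim_vec (B *\<^sub>v a + B2 *\<^sub>v y)"
    then have i: "i < d" using B2c by simp
    have "(x - B *\<^sub>v a) $ i = (B2 *\<^sub>v y) $ i" using y(2) by simp
    then show "x $ i = (B *\<^sub>v a + B2 *\<^sub>v y) $ i" using i x Bc B2c by (simp add: diff_eq_eq)
  qed (use x B2c in simp)
  have "R *\<^sub>v x = R *\<^sub>v (B *\<^sub>v a) + R *\<^sub>v (B2 *\<^sub>v y)"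
    unfolding xs using mult_add_distrib_mat_vec[OF rc] Bc B2c ac y(1) by simp
  also have "\<dots> = B *\<^sub>v a + B2 *\<^sub>v y"
    using assoc_mult_mat_vec[OF rc Bc ac, symmetric] assoc_mult_mat_vec[OF rc B2c y(1), symmetric]
      e1 e2 by simp
  finally show "R *\<^sub>v x = 1\<^sub>m d *\<^sub>v x" using xs x by simp
qed

lemma reducible_unitary_rep_split:
  assumes G: "group G" and U: "unitary_rep G d \<rho>" and red: "\<not> irreducible_rep G d \<rho>" and "d > 0"
  shows "\<exists>r B s B2. orthonormal_frame d r B \<and> orthonormal_frame d s B2 \<and> mat_range B2 = orth_compl B
    \<and> 0 < r \<and> r < d \<and> 0 < s \<and> s < d
    \<and> rep_invariant G \<rho> (mat_range B) \<and> rep_invariant G \<rho> (mat_range B2)"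
proof -
  obtain W where W: "is_subspace d W" and Winv: "rep_invariant G \<rho> W"
    and W0: "W \<noteq> {0\<^sub>v d}" and W1: "W \<noteq> carrier_vec d"
    using red assms(4) U unfolding irreducible_rep_def unitary_rep_def rep_invariant_def by blast
  obtain r B where B: "orthonormal_frame d r B" and "r \<le> d" and WB: "mat_range B = W"
    using subspace_has_orthonormal_frame[OF W] by blast
  then have r: "0 < r" "r < d"
    using orthonormal_frame_dim_pos orthonormal_frame_dim_less W0 W1 by auto
  have Bc: "B \<in> carrier_mat d r" using B by (simp add: orthonormal_frame_def)
  obtain s B2 where B2: "orthonormal_frame d s B2" and "s \<le> d" and WB2: "mat_range B2 = orth_compl B"
    using subspace_has_orthonormal_frame[OF is_subspace_orth_compl[OF Bc]] by blast
  then have s: "0 < s" "s < d"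
    using orthonormal_frame_dim_pos orthonormal_frame_dim_less
      orth_compl_nonzero[OF B] orth_compl_ne_carrier[OF B] W0 W1 WB by auto
  have "rep_invariant G \<rho> (mat_range B2)"
    using orth_compl_invariant[OF G U B] Winv WB WB2 by simp
  then show ?thesis using B B2 WB2 r s Winv WB by blast
qed

text \<open>An element acting nontrivially on a reducible unitary representation acts nontrivially on
  the invariant subspace or on its orthogonal complement, both of smaller dimension.\<close>

lemma unitary_rep_nontrivial_irreducible:
  fixes \<rho> :: "'g \<Rightarrow> complex mat" and G :: "('g,'b) monoid_scheme"
  assumes G: "group G" and g: "g \<in> carrier G"
  shows "unitary_rep G d \<rho> \<Longrightarrow> d > 0 \<Longrightarrow> \<rho> g \<noteq> 1\<^sub>m d
    \<Longrightarrow> \<exists>e \<tau>. irreducible_rep G e \<tau> \<and> \<tau> g \<noteq> 1\<^sub>m e"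
proof (induction d arbitrary: \<rho> rule: less_induct)
  case (less d \<rho>)
  show ?case
  proof (cases "irreducible_rep G d \<rho>")
    case True
    then show ?thesis using less.prems by blast
  next
    case False
    then obtain r B s B2 where B: "orthonormal_frame d r B" and B2: "orthonormal_frame d s B2"
      and WB2: "mat_range B2 = orth_compl B" and dims: "0 < r" "r < d" "0 < s" "s < d"
      and Binv: "rep_invariant G \<rho> (mat_range B)" and B2inv: "rep_invariant G \<rho> (mat_range B2)"
      using reducible_unitary_rep_split[OF G less.prems(1) _ less.prems(2)] by blast
    have \<rho>: "mat_rep G d \<rho>" using less.prems(1) by (simp add: unitary_rep_def)
    show ?thesis
    proof (cases "adjm B * \<rho> g * B = 1\<^sub>m r \<and> adjm B2 * \<rho> g * B2 = 1\<^sub>m s")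
      case True
      have Bc: "B \<in> carrier_mat d r" and B2c: "B2 \<in> carrier_mat d s"
        using B B2 by (simp_all add: orthonormal_frame_def)
      have "\<rho> g * B = B" "\<rho> g * B2 = B2"
        using invariant_frame_intertwines[OF \<rho> B Binv g]
          invariant_frame_intertwines[OF \<rho> B2 B2inv g] True Bc B2c by simp_all
      then have "\<rho> g = 1\<^sub>m d"
        using eq_one_if_fixes_complementary_frames[OF mat_rep_carrier[OF \<rho> g] B B2c WB2] by simp
      then show ?thesis using less.prems by simp
    next
      case False
      then show ?thesis
        using less.IH[OF dims(2) unitary_rep_compress[OF G less.prems(1) B Binv] dims(1)]
          less.IH[OF dims(4) unitary_rep_compress[OF G less.prems(1) B2 B2inv] dims(3)] by blast
    qed
  qed
qed

definition regular_rep :: "('g,'b) monoid_scheme \<Rightarrow> 'g list \<Rightarrow> 'g \<Rightarrow> complex mat" where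
  "regular_rep G xs h =
     mat (length xs) (length xs) (\<lambda>(r,c). if xs!r = h \<otimes>\<^bsub>G\<^esub> xs!c then 1 else 0)"

context group
begin

lemma regular_rep_one:
  assumes "set xs \<subseteq> carrier G" "distinct xs"
  shows "regular_rep G xs \<one> = 1\<^sub>m (length xs)"
proof (rule eq_matI)
  fix r c assume "r < dim_row (1\<^sub>m (length xs))" "c < dim_col (1\<^sub>m (length xs))"
  then have "r < length xs" "c < length xs" "xs!c \<in> carrier G" using assms(1) nth_mem by auto
  then show "regular_rep G xs \<one> $$ (r, c) = 1\<^sub>m (length xs) $$ (r, c)"
    using nth_eq_iff_index_eq[OF assms(2)] by (auto simp: regular_rep_def)
qed (auto simp: regular_rep_def)

lemma regular_rep_mult:
  assumes xs: "set xs = carrier G" "distinct xs" and a: "a \<in> carrier G" and b: "b \<in> carrier G"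
  shows "regular_rep G xs (a \<otimes> b) = regular_rep G xs a * regular_rep G xs b"
proof (rule eq_matI)
  define N where "N = length xs"
  have xin: "xs!i \<in> carrier G" if "i < N" for i
    using nth_mem[of i xs] that xs(1) unfolding N_def by blast
  fix r c assume "r < dim_row (regular_rep G xs a * regular_rep G xs b)"
    "c < dim_col (regular_rep G xs a * regular_rep G xs b)"
  then have r: "r < N" and c: "c < N" by (auto simp: regular_rep_def N_def)
  obtain t0 where t0: "t0 < N" "xs!t0 = b \<otimes> xs!c"
    using xs(1) b xin[OF c] unfolding N_def by (metis in_set_conv_nth m_closed)
  have "(regular_rep G xs a * regular_rep G xs b) $$ (r,c)
      = (\<Sum>t = 0..<N. regular_rep G xs a $$ (r,t) * regular_rep G xs b $$ (t,c))"
    using r c by (simp add: regular_rep_def N_def scalar_prod_def)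
  also have "\<dots> = (\<Sum>t = 0..<N. if t = t0 then (if xs!r = a \<otimes> xs!t0 then 1 else 0) else 0)"
  proof (rule sum.cong)
    fix t assume t: "t \<in> {0..<N}"
    have "xs!t = b \<otimes> xs!c \<longleftrightarrow> t = t0"
      using t0 t nth_eq_iff_index_eq[OF xs(2), of t t0] unfolding N_def by auto
    then show "regular_rep G xs a $$ (r,t) * regular_rep G xs b $$ (t,c)
        = (if t = t0 then (if xs!r = a \<otimes> xs!t0 then 1 else 0) else 0)"
      using t r c by (auto simp: regular_rep_def N_def)
  qed simp
  also have "\<dots> = regular_rep G xs (a \<otimes> b) $$ (r,c)"
    using r c t0 a b xin[OF c] by (simp add: regular_rep_def N_def m_assoc)
  finally show "regular_rep G xs (a \<otimes> b) $$ (r, c)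
      = (regular_rep G xs a * regular_rep G xs b) $$ (r, c)" by simp
qed (auto simp: regular_rep_def)

lemma regular_rep_adjm:
  assumes xs: "set xs \<subseteq> carrier G" and h: "h \<in> carrier G"
  shows "adjm (regular_rep G xs h) = regular_rep G xs (inv h)"
proof (rule eq_matI)
  fix r c assume "r < dim_row (regular_rep G xs (inv h))" "c < dim_col (regular_rep G xs (inv h))"
  then have r: "xs!r \<in> carrier G" and c: "xs!c \<in> carrier G" and rc: "r < length xs" "c < length xs"
    using xs by (auto simp: regular_rep_def)
  have "xs!c = h \<otimes> xs!r \<longleftrightarrow> xs!r = inv h \<otimes> xs!c"
    using h r c by (metis inv_closed inv_solve_left)
  then show "adjm (regular_rep G xs h) $$ (r,c) = regular_rep G xs (inv h) $$ (r,c)"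
    using rc by (auto simp: regular_rep_def)
qed (auto simp: regular_rep_def)

lemma regular_rep_unitary:
  assumes xs: "set xs = carrier G" "distinct xs"
  shows "unitary_rep G (length xs) (regular_rep G xs)"
  using regular_rep_one[of xs] regular_rep_mult[OF xs] regular_rep_adjm[of xs] xs
  unfolding unitary_rep_def mat_rep_def by (auto simp: regular_rep_def)

lemma regular_rep_nontrivial:
  assumes xs: "set xs = carrier G" and g: "g \<in> carrier G" "g \<noteq> \<one>"
  shows "length xs > 0" and "regular_rep G xs g \<noteq> 1\<^sub>m (length xs)"
proof -
  show N0: "length xs > 0" using xs one_closed by (cases xs) auto
  have x0: "xs!0 \<in> carrier G" using nth_mem[OF N0] xs by blast
  have "xs!0 \<noteq> g \<otimes> xs!0"
    using g x0 r_cancel_one'[OF x0 g(1)] by (metis l_one one_closed right_cancel)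
  then have "regular_rep G xs g $$ (0,0) = 0" using N0 by (simp add: regular_rep_def)
  then show "regular_rep G xs g \<noteq> 1\<^sub>m (length xs)" using N0 by auto
qed

lemma nontrivial_element_irreducible_witness:
  assumes fin: "finite (carrier G)" and g: "g \<in> carrier G" "g \<noteq> \<one>"
  shows "\<exists>e \<tau>. irreducible_rep G e \<tau> \<and> \<tau> g \<noteq> 1\<^sub>m e"
proof -
  obtain xs where xs: "set xs = carrier G" "distinct xs" using finite_distinct_list[OF fin] by blast
  show ?thesis
    using unitary_rep_nontrivial_irreducible[OF is_group g(1) regular_rep_unitary[OF xs]]
      regular_rep_nontrivial[OF xs(1) g] by blast
qed

end

lemma dsum_rep_carrier:
  assumes "\<forall>x\<in>set ss. snd x h \<in> carrier_mat (fst x) (fst x)"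
  shows "dsum_rep ss h \<in> carrier_mat (dsum_dim ss) (dsum_dim ss)"
  using assms by (induction ss) auto

lemma dsum_mat_rep:
  assumes "\<forall>x\<in>set ss. mat_rep G (fst x) (snd x)"
  shows "mat_rep G (dsum_dim ss) (dsum_rep ss)"
  using assms
proof (induction ss)
  case Nil
  then show ?case by (simp add: mat_rep_def)
next
  case (Cons x ss)
  then have IH: "mat_rep G (dsum_dim ss) (dsum_rep ss)" and X: "mat_rep G (fst x) (snd x)" by auto
  show ?case unfolding mat_rep_def
  proof (intro conjI ballI)
    fix h assume "h \<in> carrier G"
    then show "dsum_rep (x # ss) h \<in> carrier_mat (dsum_dim (x # ss)) (dsum_dim (x # ss))"
      using IH X unfolding mat_rep_def by auto
  next
    show "dsum_rep (x # ss) \<one>\<^bsub>G\<^esub> = 1\<^sub>m (dsum_dim (x # ss))"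
      using IH X unfolding mat_rep_def by auto
  next
    fix g h assume g: "g \<in> carrier G" and h: "h \<in> carrier G"
    have c: "snd x g \<in> carrier_mat (fst x) (fst x)" "snd x h \<in> carrier_mat (fst x) (fst x)"
      "dsum_rep ss g \<in> carrier_mat (dsum_dim ss) (dsum_dim ss)"
      "dsum_rep ss h \<in> carrier_mat (dsum_dim ss) (dsum_dim ss)"
      using IH X g h by (auto simp: mat_rep_carrier)
    show "dsum_rep (x # ss) (g \<otimes>\<^bsub>G\<^esub> h) = dsum_rep (x # ss) g * dsum_rep (x # ss) h"
      using IH X g h c unfolding mat_rep_def
      by (simp add: mult_four_block_mat[OF c(1) _ _ c(3) c(2) _ _ c(4)]
         right_mult_zero_mat[OF c(1)] left_mult_zero_mat[OF c(4)]
         right_mult_zero_mat[OF c(3)] left_mult_zero_mat[OF c(2)]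
         right_add_zero_mat[OF mult_carrier_mat[OF c(1) c(2)]]
         left_add_zero_mat[OF mult_carrier_mat[OF c(3) c(4)]])
  qed
qed

lemma dsum_rep_eq_one_components:
  assumes "\<forall>x\<in>set ss. snd x h \<in> carrier_mat (fst x) (fst x)"
    and "dsum_rep ss h = 1\<^sub>m (dsum_dim ss)"
  shows "\<forall>x\<in>set ss. snd x h = 1\<^sub>m (fst x)"
  using assms
proof (induction ss)
  case Nil
  then show ?case by simp
next
  case (Cons x ss)
  have c: "snd x h \<in> carrier_mat (fst x) (fst x)" using Cons.prems by auto
  have c2: "dsum_rep ss h \<in> carrier_mat (dsum_dim ss) (dsum_dim ss)"
    using dsum_rep_carrier Cons.prems by auto
  have eq: "four_block_mat (snd x h) (0\<^sub>m (fst x) (dsum_dim ss)) (0\<^sub>m (dsum_dim ss) (fst x))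
      (dsum_rep ss h) = 1\<^sub>m (fst x + dsum_dim ss)"
    using Cons.prems by simp
  have "snd x h = 1\<^sub>m (fst x)"
  proof (rule eq_matI)
    fix i j assume "i < dim_row (1\<^sub>m (fst x))" "j < dim_col (1\<^sub>m (fst x))"
    then show "snd x h $$ (i, j) = 1\<^sub>m (fst x) $$ (i, j)"
      using arg_cong[OF eq, of "\<lambda>A. A $$ (i,j)"] c c2 by simp
  qed (use c in auto)
  moreover have "dsum_rep ss h = 1\<^sub>m (dsum_dim ss)"
  proof (rule eq_matI)
    fix i j assume "i < dim_row (1\<^sub>m (dsum_dim ss))" "j < dim_col (1\<^sub>m (dsum_dim ss))"
    then show "dsum_rep ss h $$ (i, j) = 1\<^sub>m (dsum_dim ss) $$ (i, j)"
      using arg_cong[OF eq, of "\<lambda>A. A $$ (fst x + i, fst x + j)"] c c2 by simp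
  qed (use c2 in auto)
  ultimately show ?case using Cons.IH Cons.prems(1) by auto
qed

lemma dsum_dim_ge: "x \<in> set ss \<Longrightarrow> fst x \<le> dsum_dim ss"
  by (induction ss) auto

lemma equiv_rep_eq_one:
  assumes "equiv_rep G e \<tau> d \<sigma>" and "mat_rep G e \<tau>" and g: "g \<in> carrier G" and "\<sigma> g = 1\<^sub>m d"
  shows "\<tau> g = 1\<^sub>m e"
proof -
  obtain T where T: "T \<in> carrier_mat e e" "invertible_mat T" "T * \<tau> g = \<sigma> g * T" and "e = d"
    using assms(1) g unfolding equiv_rep_def by blast
  have tc: "\<tau> g \<in> carrier_mat e e" using mat_rep_carrier[OF assms(2) g] .
  obtain T' where T'T: "T * T' = 1\<^sub>m (dim_row T)" and TT': "T' * T = 1\<^sub>m (dim_row T')"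
    using T(2) unfolding invertible_mat_def inverts_mat_def by blast
  have "T' \<in> carrier_mat e e"
    using arg_cong[OF T'T, of dim_col] arg_cong[OF TT', of dim_col] T(1) by (auto intro: carrier_matI)
  then have T': "T' * T = 1\<^sub>m e" "T' \<in> carrier_mat e e" using TT' by auto
  have "T * \<tau> g = T" using T(1,3) assms(4) \<open>e = d\<close> by simp
  then have "(T' * T) * \<tau> g = T' * T" using assoc_mult_mat[OF T'(2) T(1) tc] by simp
  then show ?thesis using T' tc by simp
qed

lemma subspace_dim_one_cases:
  assumes W: "is_subspace 1 W"
  shows "W = {0\<^sub>v 1} \<or> W = (carrier_vec 1 :: complex vec set)"
proof (cases "W = {0\<^sub>v 1}")
  case False
  moreover have W0: "0\<^sub>v 1 \<in> W" and Wc: "W \<subseteq> carrier_vec 1"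
    using W unfolding is_subspace_def by auto
  ultimately obtain w where w: "w \<in> W" "w \<noteq> 0\<^sub>v 1" by blast
  have wc: "w \<in> carrier_vec 1" using w Wc by auto
  have w0: "w $ 0 \<noteq> 0"
  proof
    assume "w $ 0 = 0"
    then have "w = 0\<^sub>v 1" using wc by (intro eq_vecI) auto
    then show False using w by simp
  qed
  have "v \<in> W" if v: "v \<in> carrier_vec 1" for v
  proof -
    have "(v $ 0 / w $ 0) \<cdot>\<^sub>v w = v" using v wc w0 by (intro eq_vecI) auto
    moreover have "(v $ 0 / w $ 0) \<cdot>\<^sub>v w \<in> W" using W w unfolding is_subspace_def by auto
    ultimately show ?thesis by simp
  qed
  then show ?thesis using Wc by blast
qed simp

lemma irreducible_rep_trivial: "irreducible_rep G 1 (\<lambda>h. 1\<^sub>m 1)"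
  unfolding irreducible_rep_def mat_rep_def using subspace_dim_one_cases by auto

lemma complete_irreps_dsum_dim_pos:
  assumes "complete_irreps G ss"
  shows "dsum_dim ss > 0"
proof -
  obtain x where x: "x \<in> set ss" and eq: "equiv_rep G 1 (\<lambda>h. 1\<^sub>m 1) (fst x) (snd x)"
    using assms irreducible_rep_trivial unfolding complete_irreps_def by blast
  have "fst x = 1" using eq unfolding equiv_rep_def by auto
  then show ?thesis using dsum_dim_ge[OF x] by simp
qed

lemma complete_irreps_kernel_trivial:
  assumes G: "group G" and fin: "finite (carrier G)" and C: "complete_irreps G ss"
    and g: "g \<in> carrier G" and g1: "dsum_rep ss g = 1\<^sub>m (dsum_dim ss)"
  shows "g = \<one>\<^bsub>G\<^esub>"
proof (rule ccontr)
  assume "g \<noteq> \<one>\<^bsub>G\<^esub>"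
  then obtain e \<tau> where irr: "irreducible_rep G e \<tau>" and "\<tau> g \<noteq> 1\<^sub>m e"
    using group.nontrivial_element_irreducible_witness[OF G fin g] by blast
  moreover obtain x where x: "x \<in> set ss" and eq: "equiv_rep G e \<tau> (fst x) (snd x)"
    using C irr unfolding complete_irreps_def by blast
  moreover have "\<forall>x\<in>set ss. snd x g \<in> carrier_mat (fst x) (fst x)"
    using C g unfolding complete_irreps_def irreducible_rep_def mat_rep_def by auto
  then have "snd x g = 1\<^sub>m (fst x)" using dsum_rep_eq_one_components[OF _ g1] x by auto
  ultimately show False
    using equiv_rep_eq_one[OF eq _ g] irr unfolding irreducible_rep_def by blast
qed

lemma complete_irreps_dsum_inj:
  assumes G: "group G" and fin: "finite (carrier G)" and C: "complete_irreps G ss"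
    and x: "x \<in> carrier G" and y: "y \<in> carrier G" and eq: "dsum_rep ss x = dsum_rep ss y"
  shows "x = y"
proof -
  interpret group G by (rule G)
  have rep: "mat_rep G (dsum_dim ss) (dsum_rep ss)"
    by (rule dsum_mat_rep) (use C in \<open>auto simp: complete_irreps_def irreducible_rep_def\<close>)
  have "dsum_rep ss (x \<otimes>\<^bsub>G\<^esub> inv\<^bsub>G\<^esub> y) = dsum_rep ss y * dsum_rep ss (inv\<^bsub>G\<^esub> y)"
    using rep x y eq unfolding mat_rep_def by auto
  also have "\<dots> = 1\<^sub>m (dsum_dim ss)"
    using rep y r_inv[OF y] unfolding mat_rep_def by (metis inv_closed)
  finally have "x \<otimes>\<^bsub>G\<^esub> inv\<^bsub>G\<^esub> y = \<one>\<^bsub>G\<^esub>"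
    using complete_irreps_kernel_trivial[OF G fin C] x y by simp
  then show ?thesis using x y by (metis inv_equality inv_inv inv_closed)
qed
section \<open>Block matrices and semiunitary matrices\<close>

lemma block_offset_div: "v < (k::nat) \<Longrightarrow> (l*k+v) div k = l"
  by simp

lemma block_offset_less:
  assumes "l < m" "v < (k::nat)"
  shows "l*k+v < m*k"
proof -
  have "l*k+v < (l+1)*k" using assms by simp
  also have "\<dots> \<le> m*k" using assms by (intro mult_le_mono1) simp
  finally show ?thesis .
qed

lemma sum_block_row:
  fixes f :: "nat \<Rightarrow> 'a::comm_monoid_add"
  assumes k: "k > 0" and i: "i < m"
  shows "(\<Sum>u<m*k. if u div k = i then f (u mod k) else 0) = (\<Sum>v<k. f v)"
proof -
  have "(\<Sum>u<m*k. if u div k = i then f (u mod k) else 0)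
      = (\<Sum>l<m. \<Sum>u\<in>{l*k..<l*k+k}. if u div k = i then f (u mod k) else 0)"
    by (rule sum.nat_group[symmetric])
  also have "\<dots> = (\<Sum>l<m. if l = i then (\<Sum>v<k. f v) else 0)"
  proof (rule sum.cong[OF refl])
    fix l
    have "(\<Sum>u\<in>{l*k..<l*k+k}. if u div k = i then f (u mod k) else 0)
        = (\<Sum>v\<in>{0..<k}. if (v+l*k) div k = i then f ((v+l*k) mod k) else 0)"
      using sum.shift_bounds_nat_ivl[of "\<lambda>u. if u div k = i then f (u mod k) else 0" 0 "l*k" k]
      by (simp only: add.commute[of "l*k" k] add_0)
    also have "\<dots> = (\<Sum>v\<in>{0..<k}. if l = i then f v else 0)"
      by (rule sum.cong) (use k in auto)
    finally show "(\<Sum>u\<in>{l*k..<l*k+k}. if u div k = i then f (u mod k) else 0)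
        = (if l = i then (\<Sum>v<k. f v) else 0)" by (simp add: lessThan_atLeast0)
  qed
  also have "\<dots> = (\<Sum>v<k. f v)" using i by simp
  finally show ?thesis .
qed

definition block_mat :: "nat \<Rightarrow> nat \<Rightarrow> nat \<Rightarrow> nat \<Rightarrow> complex mat \<Rightarrow> complex mat" where
  "block_mat m k i i' X =
     mat (m*k) (m*k) (\<lambda>(r,c). if r div k = i \<and> c div k = i' then X $$ (r mod k, c mod k) else 0)"

lemma block_mat_carrier[simp]: "block_mat m k i i' X \<in> carrier_mat (m*k) (m*k)"
  and block_mat_dims[simp]: "dim_row (block_mat m k i i' X) = m*k" "dim_col (block_mat m k i i' X) = m*k"
  unfolding block_mat_def by auto

lemma block_mat_index:
  "r < m*k \<Longrightarrow> c < m*k \<Longrightarrow> block_mat m k i i' X $$ (r,c)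
     = (if r div k = i \<and> c div k = i' then X $$ (r mod k, c mod k) else 0)"
  unfolding block_mat_def by auto

lemma block_mat_entry:
  assumes "i < m" "i' < m" "t < k" "v < k"
  shows "block_mat m k i i' X $$ (i*k+t, i'*k+v) = X $$ (t,v)"
  using assms by (simp add: block_mat_index block_offset_less)

lemma block_mat_mult:
  assumes k: "k > 0" and "i' < m" and X: "X \<in> carrier_mat k k" and Y: "Y \<in> carrier_mat k k"
  shows "block_mat m k i i' X * block_mat m k i' i'' Y = block_mat m k i i'' (X * Y)"
proof (rule eq_matI)
  fix r c assume "r < dim_row (block_mat m k i i'' (X * Y))" "c < dim_col (block_mat m k i i'' (X * Y))"
  then have r: "r < m*k" and c: "c < m*k" by auto
  have "(block_mat m k i i' X * block_mat m k i' i'' Y) $$ (r,c)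
     = (\<Sum>u<m*k. block_mat m k i i' X $$ (r,u) * block_mat m k i' i'' Y $$ (u,c))"
    using r c by (simp add: scalar_prod_def lessThan_atLeast0)
  also have "\<dots> = (\<Sum>u<m*k. if u div k = i' then (if r div k = i \<and> c div k = i''
      then X $$ (r mod k, u mod k) * Y $$ (u mod k, c mod k) else 0) else 0)"
    by (rule sum.cong) (use r c in \<open>auto simp: block_mat_index\<close>)
  also have "\<dots> = (\<Sum>v<k. if r div k = i \<and> c div k = i''
      then X $$ (r mod k, v) * Y $$ (v, c mod k) else 0)"
    by (rule sum_block_row) fact+
  also have "\<dots> = block_mat m k i i'' (X * Y) $$ (r,c)"
    using r c X Y k by (auto simp: block_mat_index scalar_prod_def lessThan_atLeast0)
  finally show "(block_mat m k i i' X * block_mat m k i' i'' Y) $$ (r,c)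
      = block_mat m k i i'' (X * Y) $$ (r,c)" .
qed auto

lemma adjm_block_mat:
  assumes "X \<in> carrier_mat k k" "k > 0"
  shows "adjm (block_mat m k i i' X) = block_mat m k i' i (adjm X)"
  by (rule eq_matI) (use assms in \<open>auto simp: block_mat_index\<close>)

lemma block_mat_inj:
  assumes "i < m" "i' < m" and X: "X \<in> carrier_mat k k" and Y: "Y \<in> carrier_mat k k"
    and eq: "block_mat m k i i' X = block_mat m k i i' Y"
  shows "X = Y"
proof (rule eq_matI)
  fix t v assume "t < dim_row Y" "v < dim_col Y"
  then have "t < k" "v < k" using Y by auto
  then show "X $$ (t,v) = Y $$ (t,v)"
    using block_mat_entry[OF assms(1,2), of t k v] eq by metis
qed (use X Y in auto)

lemma block_mat_eq_position:
  assumes k: "k > 0" and i: "i < m" "i' < m" and t: "t < k" "v < k"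
    and nz: "X $$ (t,v) \<noteq> 0" and eq: "block_mat m k i i' X = block_mat m k j j' Y"
  shows "i = j \<and> i' = j'"
proof -
  have "block_mat m k j j' Y $$ (i*k+t, i'*k+v) \<noteq> 0"
    using block_mat_entry[OF i t, of X] nz eq by simp
  then show ?thesis
    using i t by (auto simp: block_mat_index block_offset_less split: if_splits)
qed

lemma right_invertible_row_nonzero:
  fixes Z W :: "'a::field mat"
  assumes k: "k > 0" and Z: "Z \<in> carrier_mat k k" and W: "W \<in> carrier_mat k k" and ZW: "Z * W = 1\<^sub>m k"
  shows "\<exists>v<k. Z $$ (0,v) \<noteq> 0"
proof (rule ccontr)
  assume "\<not> (\<exists>v<k. Z $$ (0,v) \<noteq> 0)"
  then have "(Z * W) $$ (0,0) = 0" using Z W k by (simp add: scalar_prod_def)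
  then show False using ZW k by simp
qed

lemma left_invertible_col_nonzero:
  fixes Z W :: "'a::field mat"
  assumes k: "k > 0" and Z: "Z \<in> carrier_mat k k" and W: "W \<in> carrier_mat k k" and WZ: "W * Z = 1\<^sub>m k"
  shows "\<exists>v<k. Z $$ (v,0) \<noteq> 0"
proof (rule ccontr)
  assume "\<not> (\<exists>v<k. Z $$ (v,0) \<noteq> 0)"
  then have "(W * Z) $$ (0,0) = 0" using Z W k by (simp add: scalar_prod_def)
  then show False using WZ k by simp
qed

lemma semiunitary_invertible_adjm:
  assumes X: "X \<in> carrier_mat k k" and Y: "Y \<in> carrier_mat k k"
    and XY: "X * Y = 1\<^sub>m k" and YX: "Y * X = 1\<^sub>m k" and su: "X * adjm X * X = X"
  shows "adjm X = Y"
proof -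
  have aX: "adjm X \<in> carrier_mat k k" using X by simp
  have "X * adjm X = X * adjm X * (X * Y)" using XY X aX by simp
  also have "\<dots> = X * adjm X * X * Y"
    by (rule assoc_mult_mat[symmetric, of _ k k _ k _ k]) (use X Y aX in auto)
  also have "\<dots> = 1\<^sub>m k" using su XY by simp
  finally have XaX: "X * adjm X = 1\<^sub>m k" .
  have "adjm X = (Y * X) * adjm X" using YX left_mult_one_mat[OF aX] by simp
  also have "\<dots> = Y * (X * adjm X)" using assoc_mult_mat[OF Y X aX] .
  finally have "adjm X = Y * (X * adjm X)" .
  then show ?thesis using XaX Y by simp
qed

text \<open>Since column c of A is the r-th standard basis vector, the (r,c) entry of A A* A is the
  squared norm of row r, which therefore is 1.\<close>

lemma semiunitary_row_zero:
  fixes A :: "complex mat"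
  assumes A: "A \<in> carrier_mat N N" and su: "A * adjm A * A = A" and rc: "r < N" "c < N"
    and one: "A $$ (r,c) = 1" and col: "\<And>t. t < N \<Longrightarrow> t \<noteq> r \<Longrightarrow> A $$ (t,c) = 0"
    and c': "c' < N" "c' \<noteq> c"
  shows "A $$ (r,c') = 0"
proof -
  have "(A * adjm A * A) $$ (r,c) = (\<Sum>t\<in>{0..<N}. (A * adjm A) $$ (r,t) * A $$ (t,c))"
    using A rc by (simp add: scalar_prod_def)
  also have "\<dots> = (\<Sum>t\<in>{0..<N}. if t = r then (A * adjm A) $$ (r,r) else 0)"
    by (rule sum.cong) (use col one in auto)
  also have "\<dots> = (\<Sum>u\<in>{0..<N}. A $$ (r,u) * cnj (A $$ (r,u)))"
    using A rc by (simp add: scalar_prod_def)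
  also have "\<dots> = complex_of_real (\<Sum>u<N. (cmod (A $$ (r,u)))^2)"
    by (simp add: mult_cnj_eq_cmod_square of_real_sum lessThan_atLeast0)
  finally have "(\<Sum>u<N. (cmod (A $$ (r,u)))^2) = 1" using su one by (metis of_real_eq_1_iff)
  moreover have "(\<Sum>u\<in>{c,c'}. (cmod (A $$ (r,u)))^2) \<le> (\<Sum>u<N. (cmod (A $$ (r,u)))^2)"
    by (rule sum_mono2) (use rc c' in auto)
  ultimately show ?thesis using one c' by simp
qed

lemma semiunitary_col_zero:
  fixes A :: "complex mat"
  assumes A: "A \<in> carrier_mat N N" and su: "A * adjm A * A = A" and rc: "r < N" "c < N"
    and one: "A $$ (r,c) = 1" and row: "\<And>t. t < N \<Longrightarrow> t \<noteq> c \<Longrightarrow> A $$ (r,t) = 0"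
    and r': "r' < N" "r' \<noteq> r"
  shows "A $$ (r',c) = 0"
proof -
  have aA: "adjm A \<in> carrier_mat N N" using A by simp
  have "(A * (adjm A * A)) $$ (r,c) = (\<Sum>t\<in>{0..<N}. A $$ (r,t) * (adjm A * A) $$ (t,c))"
    using A rc by (simp add: scalar_prod_def)
  also have "\<dots> = (\<Sum>t\<in>{0..<N}. if t = c then (adjm A * A) $$ (c,c) else 0)"
    by (rule sum.cong) (use row one in auto)
  also have "\<dots> = (\<Sum>u\<in>{0..<N}. A $$ (u,c) * cnj (A $$ (u,c)))"
    using A rc by (simp add: scalar_prod_def mult.commute)
  also have "\<dots> = complex_of_real (\<Sum>u<N. (cmod (A $$ (u,c)))^2)"
    by (simp add: mult_cnj_eq_cmod_square of_real_sum lessThan_atLeast0)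
  finally have "(\<Sum>u<N. (cmod (A $$ (u,c)))^2) = 1"
    using su one assoc_mult_mat[OF A aA A] by (metis of_real_eq_1_iff)
  moreover have "(\<Sum>u\<in>{r,r'}. (cmod (A $$ (u,c)))^2) \<le> (\<Sum>u<N. (cmod (A $$ (u,c)))^2)"
    by (rule sum_mono2) (use rc r' in auto)
  ultimately show ?thesis using one r' by simp
qed

section \<open>Rees matrix semigroups\<close>

lemma rees_carrier_Some_iff[simp]:
  "Some (a,i,j) \<in> rees_carrier G m n \<longleftrightarrow> a \<in> carrier G \<and> i < m \<and> j < n"
  unfolding rees_carrier_def by auto

lemma None_in_rees_carrier[simp]: "None \<in> rees_carrier G m n"
  unfolding rees_carrier_def by auto

lemma rees_mult_None_right[simp]: "rees_mult G P x None = None"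
  by (cases x) auto

definition sandwich_rows_single :: "nat \<Rightarrow> nat \<Rightarrow> (nat \<Rightarrow> nat \<Rightarrow> 'g option) \<Rightarrow> bool" where
  "sandwich_rows_single m n P \<longleftrightarrow>
     (\<forall>j<n. \<forall>l<m. \<forall>l'<m. P j l \<noteq> None \<longrightarrow> P j l' \<noteq> None \<longrightarrow> l = l')"

definition sandwich_cols_single :: "nat \<Rightarrow> nat \<Rightarrow> (nat \<Rightarrow> nat \<Rightarrow> 'g option) \<Rightarrow> bool" where
  "sandwich_cols_single m n P \<longleftrightarrow>
     (\<forall>i<m. \<forall>j<n. \<forall>j'<n. P j i \<noteq> None \<longrightarrow> P j' i \<noteq> None \<longrightarrow> j = j')"

lemma involution_fixes_zero:
  assumes inv: "involution_on S f st" and z: "z \<in> S" and zero: "\<And>x. x \<in> S \<Longrightarrow> f x z = z"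
  shows "st z = z"
proof -
  have stz: "st z \<in> S" using inv z unfolding involution_on_def bij_betw_def by auto
  have "st z = st (f (st z) z)" using zero[OF stz] by simp
  also have "\<dots> = f (st z) (st (st z))" using inv stz z unfolding involution_on_def by auto
  also have "\<dots> = z" using inv z zero[OF stz] unfolding involution_on_def by auto
  finally show ?thesis .
qed

context group
begin

lemma rees_mutually_inverse:
  assumes a: "a \<in> carrier G" and c: "c \<in> carrier G" and p: "p \<in> carrier G" and q: "q \<in> carrier G"
    and "P j i' = Some p" "P j' i = Some q" and cq: "c \<otimes> q = inv (a \<otimes> p)"
  shows "rees_mult G P (rees_mult G P (Some (a,i,j)) (Some (c,i',j'))) (Some (a,i,j)) = Some (a,i,j)"
    and "rees_mult G P (rees_mult G P (Some (c,i',j')) (Some (a,i,j))) (Some (c,i',j')) = Some (c,i',j')"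
proof -
  have "a \<otimes> p \<otimes> c \<otimes> q = (a \<otimes> p) \<otimes> (c \<otimes> q)" using a c p q by (simp add: m_assoc)
  then have apcq: "a \<otimes> p \<otimes> c \<otimes> q = \<one>" using cq a p by simp
  have "c \<otimes> q \<otimes> a \<otimes> p = (c \<otimes> q) \<otimes> (a \<otimes> p)" using a c p q by (simp add: m_assoc)
  then have cqap: "c \<otimes> q \<otimes> a \<otimes> p = \<one>" using cq a p by simp
  show "rees_mult G P (rees_mult G P (Some (a,i,j)) (Some (c,i',j'))) (Some (a,i,j)) = Some (a,i,j)"
    using assms apcq by simp
  show "rees_mult G P (rees_mult G P (Some (c,i',j')) (Some (a,i,j))) (Some (c,i',j')) = Some (c,i',j')"
    using assms cqap by simp
qed

lemma rees_inverse_unique: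
  assumes sw: "sandwich_matrix G m n P"
    and rows: "sandwich_rows_single m n P" and cols: "sandwich_cols_single m n P"
    and a: "a \<in> carrier G" and i: "i < m" and j: "j < n" and i': "i' < m" and j': "j' < n"
    and p: "P j i' = Some p" and q: "P j' i = Some q"
    and b: "b \<in> rees_carrier G m n"
    and bx: "rees_mult G P (rees_mult G P (Some (a,i,j)) b) (Some (a,i,j)) = Some (a,i,j)"
  shows "b = Some (inv (a \<otimes> p) \<otimes> inv q, i', j')"
proof -
  obtain c k l where bs: "b = Some (c,k,l)" using bx by (cases b) auto
  have c: "c \<in> carrier G" and k: "k < m" and l: "l < n" using b bs by auto
  have pc: "p \<in> carrier G" and qc: "q \<in> carrier G"
    using sw p q i j i' j' unfolding sandwich_matrix_def by auto
  obtain p' where p': "P j k = Some p'" using bx bs by (cases "P j k") auto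
  obtain q' where q': "P l i = Some q'" using bx bs p' by (cases "P l i") auto
  have "k = i'" using rows j k i' p p' unfolding sandwich_rows_single_def by blast
  moreover have "l = j'" using cols i l j' q q' unfolding sandwich_cols_single_def by blast
  ultimately have "(a \<otimes> p) \<otimes> (c \<otimes> q) \<otimes> a = \<one> \<otimes> a"
    using bx bs p p' q q' a pc c qc by (simp add: m_assoc)
  then have "(a \<otimes> p) \<otimes> (c \<otimes> q) = \<one>"
    using right_cancel[OF a m_closed[OF m_closed[OF a pc] m_closed[OF c qc]] one_closed] by simp
  then have "c \<otimes> q = inv (a \<otimes> p)" using a pc c qc by (metis inv_equality inv_comm m_closed)
  then have "c = inv (a \<otimes> p) \<otimes> inv q" using a pc c qc by (metis inv_solve_right inv_closed m_closed)
  then show ?thesis using bs \<open>k = i'\<close> \<open>l = j'\<close> by simp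
qed

lemma rees_inverse_semigroup:
  assumes sw: "sandwich_matrix G m n P" and reg: "regular_sandwich m n P"
    and rows: "sandwich_rows_single m n P" and cols: "sandwich_cols_single m n P"
  shows "inverse_semigroup (rees_carrier G m n) (rees_mult G P)"
  unfolding inverse_semigroup_def
proof
  fix x assume xS: "x \<in> rees_carrier G m n"
  show "\<exists>!b. b \<in> rees_carrier G m n \<and> rees_mult G P (rees_mult G P x b) x = x
      \<and> rees_mult G P (rees_mult G P b x) b = b"
  proof (cases x)
    case None
    then show ?thesis by (intro ex1I[of _ None]) auto
  next
    case (Some t)
    then obtain a i j where x: "x = Some (a,i,j)" by (cases t) auto
    have a: "a \<in> carrier G" and i: "i < m" and j: "j < n" using xS x by auto
    obtain i' p where i': "i' < m" and p: "P j i' = Some p"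
      using reg j unfolding regular_sandwich_def by blast
    obtain j' q where j': "j' < n" and q: "P j' i = Some q"
      using reg i unfolding regular_sandwich_def by blast
    have pc: "p \<in> carrier G" and qc: "q \<in> carrier G"
      using sw p q i j i' j' unfolding sandwich_matrix_def by auto
    define c where "c = inv (a \<otimes> p) \<otimes> inv q"
    have c: "c \<in> carrier G" unfolding c_def using a pc qc by simp
    have "c \<otimes> q = inv (a \<otimes> p)" unfolding c_def using a pc qc by (simp add: m_assoc)
    note mutual = rees_mutually_inverse[where P=P and j=j and i'=i' and j'=j' and i=i,
        OF a c pc qc p q this]
    show ?thesis
      using rees_inverse_unique[OF sw rows cols a i j i' j' p q] mutual c i' j'
      by (intro ex1I[of _ "Some (c, i', j')"]) (auto simp: x c_def)
  qed
qed

end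

lemma semiunitary_block_mat:
  assumes k: "k > 0" and i: "i < m" "i' < m" and X: "X \<in> carrier_mat k k"
    and su: "block_mat m k i i' X * adjm (block_mat m k i i' X) * block_mat m k i i' X
      = block_mat m k i i' X"
  shows "X * adjm X * X = X"
proof -
  have aX: "adjm X \<in> carrier_mat k k" and XaX: "X * adjm X \<in> carrier_mat k k" using X by auto
  have "block_mat m k i i' (X * adjm X * X)
      = block_mat m k i i' X * block_mat m k i' i (adjm X) * block_mat m k i i' X"
    using block_mat_mult[OF k i(1) XaX X] block_mat_mult[OF k i(2) X aX] by simp
  also have "\<dots> = block_mat m k i i' X"
    using su by (simp only: adjm_block_mat[OF X k])
  finally show ?thesis
    using block_mat_inj[OF i mult_carrier_mat[OF XaX X] X] by simp
qed

locale rees_matrix_rep = group G for G :: "('g,'b) monoid_scheme" (structure) +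
  fixes m n k :: nat and P :: "nat \<Rightarrow> nat \<Rightarrow> 'g option" and \<sigma> :: "'g \<Rightarrow> complex mat"
  assumes sandwich: "sandwich_matrix G m n P" and regular: "regular_sandwich m n P"
    and rep: "mat_rep G k \<sigma>" and k_pos: "k > 0"
begin

lemma sigma_carrier[simp]: "h \<in> carrier G \<Longrightarrow> \<sigma> h \<in> carrier_mat k k"
  using rep by (rule mat_rep_carrier)

lemma sigma_one[simp]: "\<sigma> \<one> = 1\<^sub>m k"
  using rep unfolding mat_rep_def by simp

lemma sigma_inv:
  assumes x: "x \<in> carrier G"
  shows "\<sigma> x * \<sigma> (inv x) = 1\<^sub>m k" "\<sigma> (inv x) * \<sigma> x = 1\<^sub>m k"
proof -
  have mult: "\<sigma> (g \<otimes> h) = \<sigma> g * \<sigma> h" if "g \<in> carrier G" "h \<in> carrier G" for g h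
    using rep that unfolding mat_rep_def by blast
  show "\<sigma> x * \<sigma> (inv x) = 1\<^sub>m k" "\<sigma> (inv x) * \<sigma> x = 1\<^sub>m k"
    using mult[of x "inv x"] mult[of "inv x" x] x r_inv[OF x] l_inv[OF x] sigma_one
    by (metis inv_closed)+
qed

lemma sandwich_entry_carrier: "j < n \<Longrightarrow> i < m \<Longrightarrow> P j i = Some p \<Longrightarrow> p \<in> carrier G"
  using sandwich unfolding sandwich_matrix_def by auto

lemma pi_l_carrier[simp]: "pi_l G P m k \<sigma> s \<in> carrier_mat (m*k) (m*k)"
  by (cases s) (auto simp: pi_l_def)

lemma pi_r_carrier[simp]: "pi_r G P n k \<sigma> s \<in> carrier_mat (n*k) (n*k)"
  by (cases s) (auto simp: pi_r_def)

lemma pi_l_index: "r < m*k \<Longrightarrow> c < m*k \<Longrightarrow> pi_l G P m k \<sigma> (Some (a,i,j)) $$ (r,c) =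
   (if r div k = i then ext_rep k \<sigma> (map_option (\<lambda>p. a \<otimes> p) (P j (c div k))) $$ (r mod k, c mod k)
    else 0)"
  by (simp add: pi_l_def)

lemma pi_r_index: "r < n*k \<Longrightarrow> c < n*k \<Longrightarrow> pi_r G P n k \<sigma> (Some (a,i,j)) $$ (r,c) =
   (if c div k = j then ext_rep k \<sigma> (map_option (\<lambda>p. p \<otimes> a) (P (r div k) i)) $$ (r mod k, c mod k)
    else 0)"
  by (simp add: pi_r_def)

lemma mod_ne_zero_in_block: "t div k = l \<Longrightarrow> t \<noteq> l*k \<Longrightarrow> t mod k \<noteq> 0"
  by (metis add.right_neutral div_mult_mod_eq)

text \<open>If row j of P had nonzero entries p1 in column l1 and p2 in column l2, the image of
  (p1\<inverse>)_{l1 j} under the left representation would be semiunitary with entry 1 at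
  (l1 k, l1 k); its row l1 k would then vanish outside that entry, but it contains the first row
  of the invertible matrix \<sigma>(p1\<inverse> p2).\<close>

lemma semiunitary_pi_l_rows_single:
  assumes su: "semiunitary (rees_carrier G m n) (pi_l G P m k \<sigma>)"
  shows "sandwich_rows_single m n P"
  unfolding sandwich_rows_single_def
proof (intro allI impI, rule ccontr)
  fix j l1 l2 assume j: "j < n" and l: "l1 < m" "l2 < m"
    and "P j l1 \<noteq> None" "P j l2 \<noteq> None" and ne: "l1 \<noteq> l2"
  then obtain p1 p2 where p1: "P j l1 = Some p1" and p2: "P j l2 = Some p2" by blast
  have p1c: "p1 \<in> carrier G" and p2c: "p2 \<in> carrier G"
    using sandwich_entry_carrier j l p1 p2 by auto
  define A where "A = pi_l G P m k \<sigma> (Some (inv p1, l1, j))"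
  have A: "A \<in> carrier_mat (m*k) (m*k)" unfolding A_def by simp
  have suA: "A * adjm A * A = A" using su p1c j l unfolding semiunitary_def A_def by auto
  have r: "l1*k < m*k" using block_offset_less[OF l(1) k_pos] by simp
  have e1: "A $$ (l1*k, l1*k) = 1"
    unfolding A_def using pi_l_index[OF r r] p1 k_pos p1c by (simp add: ext_rep_def)
  have col: "A $$ (t, l1*k) = 0" if t: "t < m*k" "t \<noteq> l1*k" for t
  proof -
    have "A $$ (t, l1*k) = (if t div k = l1 then (1\<^sub>m k) $$ (t mod k, 0) else 0)"
      unfolding A_def using pi_l_index[OF t(1) r] p1 k_pos p1c by (simp add: ext_rep_def)
    then show ?thesis using mod_ne_zero_in_block[of t l1] t k_pos by auto
  qed
  have "\<sigma> (inv p1 \<otimes> p2) $$ (0,v) = 0" if v: "v < k" for v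
  proof -
    have c': "l2*k+v < m*k" using block_offset_less[OF l(2) v] .
    have "l2*k+v \<noteq> l1*k"
    proof
      assume "l2*k+v = l1*k"
      then have "(l2*k+v) div k = (l1*k) div k" by simp
      then show False using block_offset_div[OF v] ne k_pos by simp
    qed
    then have "A $$ (l1*k, l2*k+v) = 0" using semiunitary_row_zero[OF A suA r r e1 col c'] by blast
    then show ?thesis unfolding A_def using pi_l_index[OF r c'] p2 k_pos v
      by (simp add: ext_rep_def)
  qed
  moreover have xc: "inv p1 \<otimes> p2 \<in> carrier G" using p1c p2c by simp
  ultimately show False
    using right_invertible_row_nonzero[OF k_pos sigma_carrier[OF xc] sigma_carrier[OF inv_closed[OF xc]]]
      sigma_inv[OF xc] by blast
qed

lemma semiunitary_pi_r_cols_single: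
  assumes su: "semiunitary (rees_carrier G m n) (pi_r G P n k \<sigma>)"
  shows "sandwich_cols_single m n P"
  unfolding sandwich_cols_single_def
proof (intro allI impI, rule ccontr)
  fix i j1 j2 assume i: "i < m" and j: "j1 < n" "j2 < n"
    and "P j1 i \<noteq> None" "P j2 i \<noteq> None" and ne: "j1 \<noteq> j2"
  then obtain p1 p2 where p1: "P j1 i = Some p1" and p2: "P j2 i = Some p2" by blast
  have p1c: "p1 \<in> carrier G" and p2c: "p2 \<in> carrier G"
    using sandwich_entry_carrier j i p1 p2 by auto
  define A where "A = pi_r G P n k \<sigma> (Some (inv p1, i, j1))"
  have A: "A \<in> carrier_mat (n*k) (n*k)" unfolding A_def by simp
  have suA: "A * adjm A * A = A" using su p1c j i unfolding semiunitary_def A_def by auto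
  have r: "j1*k < n*k" using block_offset_less[OF j(1) k_pos] by simp
  have e1: "A $$ (j1*k, j1*k) = 1"
    unfolding A_def using pi_r_index[OF r r] p1 k_pos p1c by (simp add: ext_rep_def)
  have row: "A $$ (j1*k, t) = 0" if t: "t < n*k" "t \<noteq> j1*k" for t
  proof -
    have "A $$ (j1*k, t) = (if t div k = j1 then (1\<^sub>m k) $$ (0, t mod k) else 0)"
      unfolding A_def using pi_r_index[OF r t(1)] p1 k_pos p1c by (simp add: ext_rep_def)
    then show ?thesis using mod_ne_zero_in_block[of t j1] t k_pos by auto
  qed
  have "\<sigma> (p2 \<otimes> inv p1) $$ (v,0) = 0" if v: "v < k" for v
  proof -
    have r': "j2*k+v < n*k" using block_offset_less[OF j(2) v] .
    have "j2*k+v \<noteq> j1*k"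
    proof
      assume "j2*k+v = j1*k"
      then have "(j2*k+v) div k = (j1*k) div k" by simp
      then show False using block_offset_div[OF v] ne k_pos by simp
    qed
    then have "A $$ (j2*k+v, j1*k) = 0" using semiunitary_col_zero[OF A suA r r e1 row r'] by blast
    then show ?thesis unfolding A_def using pi_r_index[OF r' r] p2 k_pos v
      by (simp add: ext_rep_def)
  qed
  moreover have xc: "p2 \<otimes> inv p1 \<in> carrier G" using p1c p2c by simp
  ultimately show False
    using left_invertible_col_nonzero[OF k_pos sigma_carrier[OF xc] sigma_carrier[OF inv_closed[OF xc]]]
      sigma_inv[OF xc] by blast
qed

lemma semiunitary_imp_inverse_semigroup:
  assumes "semiunitary (rees_carrier G m n) (pi_l G P m k \<sigma>)"
    and "semiunitary (rees_carrier G m n) (pi_r G P n k \<sigma>)"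
  shows "inverse_semigroup (rees_carrier G m n) (rees_mult G P)"
  using rees_inverse_semigroup[OF sandwich regular semiunitary_pi_l_rows_single[OF assms(1)]
      semiunitary_pi_r_cols_single[OF assms(2)]] .

lemma pi_l_eq_block_mat:
  assumes rows: "sandwich_rows_single m n P" and a: "a \<in> carrier G"
    and j: "j < n" and i': "i' < m" and p: "P j i' = Some p"
  shows "pi_l G P m k \<sigma> (Some (a,i,j)) = block_mat m k i i' (\<sigma> (a \<otimes> p))"
proof (rule eq_matI)
  fix r c assume "r < dim_row (block_mat m k i i' (\<sigma> (a \<otimes> p)))"
    "c < dim_col (block_mat m k i i' (\<sigma> (a \<otimes> p)))"
  then have r: "r < m*k" and c: "c < m*k" by auto
  have "c div k < m" using c by (simp add: less_mult_imp_div_less)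
  then have "P j (c div k) = None" if "c div k \<noteq> i'"
    using rows j i' p that unfolding sandwich_rows_single_def by blast
  then show "pi_l G P m k \<sigma> (Some (a,i,j)) $$ (r,c) = block_mat m k i i' (\<sigma> (a \<otimes> p)) $$ (r,c)"
    using pi_l_index[OF r c] block_mat_index[OF r c] p k_pos by (auto simp: ext_rep_def)
qed (simp_all add: pi_l_def)

text \<open>Semiunitarity makes the single nonzero block \<sigma>(a p) of the left representation unitary.\<close>

lemma pi_l_adjm_block_mat:
  assumes sl: "semiunitary (rees_carrier G m n) (pi_l G P m k \<sigma>)"
    and a: "a \<in> carrier G" and i: "i < m" and j: "j < n" and i': "i' < m" and p: "P j i' = Some p"
  shows "adjm (pi_l G P m k \<sigma> (Some (a,i,j))) = block_mat m k i' i (\<sigma> (inv (a \<otimes> p)))"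
proof -
  have ap: "a \<otimes> p \<in> carrier G" using a sandwich_entry_carrier[OF j i' p] by simp
  define X where "X = \<sigma> (a \<otimes> p)"
  have X: "X \<in> carrier_mat k k" and Xinv: "\<sigma> (inv (a \<otimes> p)) \<in> carrier_mat k k"
    unfolding X_def using ap by auto
  have pi: "pi_l G P m k \<sigma> (Some (a,i,j)) = block_mat m k i i' X"
    unfolding X_def by (rule pi_l_eq_block_mat[OF semiunitary_pi_l_rows_single[OF sl] a j i' p])
  have "Some (a,i,j) \<in> rees_carrier G m n" using a i j by simp
  then have "pi_l G P m k \<sigma> (Some (a,i,j)) * adjm (pi_l G P m k \<sigma> (Some (a,i,j)))
      * pi_l G P m k \<sigma> (Some (a,i,j)) = pi_l G P m k \<sigma> (Some (a,i,j))"
    using sl unfolding semiunitary_def by blast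
  then have "X * adjm X * X = X"
    unfolding pi by (rule semiunitary_block_mat[OF k_pos i i' X])
  then have "adjm X = \<sigma> (inv (a \<otimes> p))"
    using semiunitary_invertible_adjm[OF X Xinv] sigma_inv[OF ap] unfolding X_def by simp
  then show ?thesis using pi adjm_block_mat[OF X k_pos] by simp
qed

lemma block_mat_sigma_eq:
  assumes faithful: "\<And>x y. x \<in> carrier G \<Longrightarrow> y \<in> carrier G \<Longrightarrow> \<sigma> x = \<sigma> y \<Longrightarrow> x = y"
    and x: "x \<in> carrier G" and y: "y \<in> carrier G" and i: "i < m" "i' < m"
    and eq: "block_mat m k i i' (\<sigma> x) = block_mat m k j j' (\<sigma> y)"
  shows "i = j \<and> i' = j' \<and> x = y"
proof -
  obtain v where "v < k" "\<sigma> x $$ (0,v) \<noteq> 0"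
    using right_invertible_row_nonzero[OF k_pos sigma_carrier[OF x] sigma_carrier[OF inv_closed[OF x]]]
      sigma_inv[OF x] by blast
  then have "i = j \<and> i' = j'" using block_mat_eq_position[OF k_pos i _ _ _ eq] k_pos by auto
  then have "\<sigma> x = \<sigma> y" using block_mat_inj[OF i sigma_carrier[OF x] sigma_carrier[OF y]] eq by simp
  then show ?thesis using \<open>i = j \<and> i' = j'\<close> faithful[OF x y] by simp
qed

lemma star_semiunitary_inverse:
  assumes sl: "semiunitary (rees_carrier G m n) (pi_l G P m k \<sigma>)"
    and sr: "semiunitary (rees_carrier G m n) (pi_r G P n k \<sigma>)"
    and inv: "involution_on (rees_carrier G m n) (rees_mult G P) st"
    and star: "star_rep (rees_carrier G m n) st (pi_l G P m k \<sigma>)"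
    and faithful: "\<And>x y. x \<in> carrier G \<Longrightarrow> y \<in> carrier G \<Longrightarrow> \<sigma> x = \<sigma> y \<Longrightarrow> x = y"
    and s: "s \<in> rees_carrier G m n"
  shows "rees_mult G P (rees_mult G P s (st s)) s = s
    \<and> rees_mult G P (rees_mult G P (st s) s) (st s) = st s"
proof -
  have st_None: "st None = None" by (rule involution_fixes_zero[OF inv]) auto
  show ?thesis
  proof (cases s)
    case None
    then show ?thesis using st_None by simp
  next
    case (Some t)
    then obtain a i j where s_eq: "s = Some (a,i,j)" by (cases t) auto
    have a: "a \<in> carrier G" and i: "i < m" and j: "j < n" using s s_eq by auto
    have "st s \<in> rees_carrier G m n" and "st (st s) = s"
      using inv s unfolding involution_on_def bij_betw_def by auto
    moreover have "st s \<noteq> None"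
    proof
      assume "st s = None"
      then show False using \<open>st (st s) = s\<close> st_None s_eq by simp
    qed
    ultimately obtain c i2 j2 where t_eq: "st s = Some (c,i2,j2)"
      and c: "c \<in> carrier G" and i2: "i2 < m" and j2: "j2 < n" by auto
    obtain i' p where i': "i' < m" and p: "P j i' = Some p"
      using regular j unfolding regular_sandwich_def by blast
    obtain j' q where j': "j' < n" and q: "P j' i = Some q"
      using regular i unfolding regular_sandwich_def by blast
    obtain i3 p3 where i3: "i3 < m" and p3: "P j2 i3 = Some p3"
      using regular j2 unfolding regular_sandwich_def by blast
    have pc: "p \<in> carrier G" and qc: "q \<in> carrier G" and p3c: "p3 \<in> carrier G"
      using sandwich_entry_carrier i j i' j' p q i3 j2 p3 by auto
    have "pi_l G P m k \<sigma> (st s) = adjm (pi_l G P m k \<sigma> s)"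
      using star s unfolding star_rep_def by blast
    then have "pi_l G P m k \<sigma> (Some (c,i2,j2)) = adjm (pi_l G P m k \<sigma> (Some (a,i,j)))"
      unfolding t_eq[symmetric] s_eq[symmetric] .
    then have "block_mat m k i2 i3 (\<sigma> (c \<otimes> p3)) = block_mat m k i' i (\<sigma> (inv (a \<otimes> p)))"
      unfolding pi_l_eq_block_mat[OF semiunitary_pi_l_rows_single[OF sl] c j2 i3 p3]
        pi_l_adjm_block_mat[OF sl a i j i' p] .
    then have "i2 = i' \<and> i3 = i \<and> c \<otimes> p3 = inv (a \<otimes> p)"
      using block_mat_sigma_eq[OF faithful m_closed[OF c p3c] inv_closed[OF m_closed[OF a pc]] i2 i3]
      by blast
    then have "i2 = i'" "i3 = i" and cp3: "c \<otimes> p3 = inv (a \<otimes> p)" by auto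
    moreover have "j2 = j'"
      using semiunitary_pi_r_cols_single[OF sr] i j2 j' p3 q \<open>i3 = i\<close>
      unfolding sandwich_cols_single_def by blast
    ultimately show ?thesis
      using rees_mutually_inverse[where P=P and j=j and i'=i' and j'=j' and i=i,
          OF a c pc qc p q] p3 q s_eq t_eq by simp
  qed
qed

end

theorem mainTheorem7:
  fixes G :: "('g, 'b) monoid_scheme"
    and m n :: nat
    and P :: "nat \<Rightarrow> nat \<Rightarrow> 'g option"
    and ss :: "(nat \<times> ('g \<Rightarrow> complex mat)) list"
  assumes "group G" and "finite (carrier G)"
    and "sandwich_matrix G m n P"
    and "regular_sandwich m n P"
    and "complete_irreps G ss"
  defines "S \<equiv> rees_carrier G m n"
    and "k \<equiv> dsum_dim ss"
    and "\<sigma> \<equiv> dsum_rep ss"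
  shows "(semiunitary S (pi_l G P m k \<sigma>) \<and> semiunitary S (pi_r G P n k \<sigma>)
            \<longrightarrow> inverse_semigroup S (rees_mult G P))
       \<and> (\<forall>st. involution_on S (rees_mult G P) st
              \<and> semiunitary S (pi_l G P m k \<sigma>) \<and> semiunitary S (pi_r G P n k \<sigma>)
              \<and> star_rep S st (pi_l G P m k \<sigma>) \<and> star_rep S st (pi_r G P n k \<sigma>)
            \<longrightarrow> inverse_semigroup S (rees_mult G P)
              \<and> (\<forall>s\<in>S. rees_mult G P (rees_mult G P s (st s)) s = s
                      \<and> rees_mult G P (rees_mult G P (st s) s) (st s) = st s))"
proof -
  have "mat_rep G k \<sigma>" unfolding k_def \<sigma>_def
    by (rule dsum_mat_rep) (use assms(5) in \<open>auto simp: complete_irreps_def irreducible_rep_def\<close>)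
  then interpret rees_matrix_rep G m n k P \<sigma>
    using assms(1,3,4) complete_irreps_dsum_dim_pos[OF assms(5)]
    by (auto simp: rees_matrix_rep_def rees_matrix_rep_axioms_def k_def)
  have faithful: "\<And>x y. x \<in> carrier G \<Longrightarrow> y \<in> carrier G \<Longrightarrow> \<sigma> x = \<sigma> y \<Longrightarrow> x = y"
    unfolding \<sigma>_def using complete_irreps_dsum_inj[OF assms(1,2,5)] by blast
  show ?thesis
    unfolding S_def
    using semiunitary_imp_inverse_semigroup star_semiunitary_inverse[OF _ _ _ _ faithful] by blast
qed

end
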